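(* For any choice of entropy function $\phi$, function $\lambda:\mathbb{R}_+\to\mathbb{R}$, exponents $p,q>0$ and distance $\Delta$ on $\mathbb{R}_+$, and for any mm-spaces $\mathcal{X},\mathcal{Y}$, one has $\mathrm{UGW}(\mathcal{X},\mathcal{Y})\geq\mathrm{CGW}(\mathcal{X},\mathcal{Y})$.
   Context: An mm-space $\mathcal{X}=(X,d_X,\mu)$ is a complete separable metric space with a positive (finite) Borel measure. An entropy function is convex, lower semicontinuous $\phi:\mathbb{R}_+\to[0,+\infty]$ with $\phi(1)=0$ and $\phi'_\infty=\lim_{r\to\infty}\phi(r)/r$. For positive measures $\alpha,\beta$ on $Z$ with $\alpha=\frac{d\alpha}{d\beta}\beta+\alpha^\perp$: $D_\phi(\alpha|\beta)=\int\phi(\frac{d\alpha}{d\beta})d\beta+\phi'_\infty\alpha^\perp(Z)$, $D^\otimes_\phi(\alpha|\beta)=D_\phi(\alpha\otimes\alpha|\beta\otimes\beta)$. With $\Gamma(x,x',y,y')=\Delta(d_X(x,x'),d_Y(y,y'))$: $\mathrm{UGW}(\mathcal{X},\mathcal{Y})=\inf_{\pi\in\mathcal{M}_+(X\times Y)}\int\lambda(\Gamma)\,d\pi\,d\pi+D^\otimes_\phi(\pi_1|\mu)+D^\otimes_\phi(\pi_2|\nu)$, where $\pi_1,\pi_2$ are the marginals. Reverse entropy: $\psi(r)=r\phi(1/r)$, $\psi(0)=\phi'_\infty$, $\psi'_\infty=\phi(0)$; $L_c(r,s)=c+\psi(r)+\psi(s)$; $H_c(r,s)=\inf_{\theta\ge0}\theta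 L_c(r/\theta,s/\theta)$ (value at $\theta=0$ being $\psi'_\infty(r+s)$). Cone $\mathcal{C}[Z]=(Z\times\mathbb{R}_+)/(Z\times\{0\})$, points $[z,r]$. On $\mathcal{C}[\mathbb{R}_+]$: $\mathcal{D}([a,u],[b,v])^q=H_{\lambda(\Delta(a,b))}(u^p,v^p)$. $\mathcal{U}_p(\mu,\nu)$: the $\alpha\in\mathcal{M}_+(\mathcal{C}[X]\times\mathcal{C}[Y])$ with $\int\xi(x)r^p\,d\alpha=\int\xi\,d\mu$ and $\int\zeta(y)s^p\,d\alpha=\int\zeta\,d\nu$ for all continuous bounded $\xi,\zeta$. $\mathrm{CGW}(\mathcal{X},\mathcal{Y})=\inf_{\alpha\in\mathcal{U}_p(\mu,\nu)}\int\mathcal{D}([d_X(x,x'),rr'],[d_Y(y,y'),ss'])^q\,d\alpha\,d\alpha$. *)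

theory Defs
  imports "HOL-Analysis.Analysis"
begin

text \<open>An entropy function phi : R_+ -> [0,+oo], convex, lower semicontinuous on [0,oo),
  with phi 1 = 0. Values at negative arguments are irrelevant.\<close>

definition convex_on_nonneg :: "(real \<Rightarrow> ennreal) \<Rightarrow> bool" where
  "convex_on_nonneg \<phi> \<longleftrightarrow>
     (\<forall>x y t. 0 \<le> x \<longrightarrow> 0 \<le> y \<longrightarrow> 0 \<le> t \<longrightarrow> t \<le> 1 \<longrightarrow>
        \<phi> (t * x + (1 - t) * y) \<le> ennreal t * \<phi> x + ennreal (1 - t) * \<phi> y)"

definition lsc_on_nonneg :: "(real \<Rightarrow> ennreal) \<Rightarrow> bool" where
  "lsc_on_nonneg \<phi> \<longleftrightarrow>
     (\<forall>x X. 0 \<le> x \<longrightarrow> (\<forall>n. 0 \<le> X n) \<longrightarrow> X \<longlonglongrightarrow> x \<longrightarrow>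
        \<phi> x \<le> liminf (\<lambda>n. \<phi> (X n)))"

definition entropy_fn :: "(real \<Rightarrow> ennreal) \<Rightarrow> bool" where
  "entropy_fn \<phi> \<longleftrightarrow> convex_on_nonneg \<phi> \<and> lsc_on_nonneg \<phi> \<and> \<phi> 1 = 0"

definition phi_inf :: "(real \<Rightarrow> ennreal) \<Rightarrow> ennreal" where
  "phi_inf \<phi> = Lim at_top (\<lambda>r. \<phi> r / ennreal r)"

definition leb_decomp :: "'a measure \<Rightarrow> 'a measure \<Rightarrow> ('a \<Rightarrow> real) \<Rightarrow> 'a measure \<Rightarrow> bool" where
  "leb_decomp \<beta> \<alpha> f \<alpha>s \<longleftrightarrow>
     f \<in> borel_measurable \<beta> \<and> (\<forall>x. 0 \<le> f x) \<and> sets \<alpha>s = sets \<beta> \<and>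
     (\<exists>N\<in>sets \<beta>. emeasure \<beta> N = 0 \<and> emeasure \<alpha>s (space \<beta> - N) = 0) \<and>
     (\<forall>A\<in>sets \<beta>. emeasure \<alpha> A = (\<integral>\<^sup>+x\<in>A. ennreal (f x) \<partial>\<beta>) + emeasure \<alpha>s A)"

definition D_phi :: "(real \<Rightarrow> ennreal) \<Rightarrow> 'a measure \<Rightarrow> 'a measure \<Rightarrow> ennreal" where
  "D_phi \<phi> \<alpha> \<beta> = (SOME v. \<exists>f \<alpha>s. leb_decomp \<beta> \<alpha> f \<alpha>s \<and>
       v = (\<integral>\<^sup>+x. \<phi> (f x) \<partial>\<beta>) + phi_inf \<phi> * emeasure \<alpha>s (space \<beta>))"

definition D_phi_tensor :: "(real \<Rightarrow> ennreal) \<Rightarrow> 'a measure \<Rightarrow> 'a measure \<Rightarrow> ennreal" where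
  "D_phi_tensor \<phi> \<alpha> \<beta> = D_phi \<phi> (\<alpha> \<Otimes>\<^sub>M \<alpha>) (\<beta> \<Otimes>\<^sub>M \<beta>)"

text \<open>Integral of an extended-real valued function: positive part minus negative part,
  with the convention oo - oo = +oo (ill-defined integrals count as +oo).\<close>
definition sint :: "'a measure \<Rightarrow> ('a \<Rightarrow> ereal) \<Rightarrow> ereal" where
  "sint M f = (let P = (\<integral>\<^sup>+x. e2ennreal (f x) \<partial>M); N = (\<integral>\<^sup>+x. e2ennreal (- f x) \<partial>M)
     in if P = \<infinity> \<and> N = \<infinity> then \<infinity> else enn2ereal P - enn2ereal N)"

definition mm_space :: "'a::polish_space measure \<Rightarrow> bool" where
  "mm_space \<mu> \<longleftrightarrow> sets \<mu> = sets borel \<and> finite_measure \<mu>"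

definition dist_on_nonneg :: "(real \<Rightarrow> real \<Rightarrow> real) \<Rightarrow> bool" where
  "dist_on_nonneg \<Delta> \<longleftrightarrow>
     (\<forall>a b. 0 \<le> a \<longrightarrow> 0 \<le> b \<longrightarrow> 0 \<le> \<Delta> a b \<and> (\<Delta> a b = 0 \<longleftrightarrow> a = b) \<and> \<Delta> a b = \<Delta> b a) \<and>
     (\<forall>a b c. 0 \<le> a \<longrightarrow> 0 \<le> b \<longrightarrow> 0 \<le> c \<longrightarrow> \<Delta> a c \<le> \<Delta> a b + \<Delta> b c)"

definition UGW_obj :: "(real \<Rightarrow> ennreal) \<Rightarrow> (real \<Rightarrow> real) \<Rightarrow> (real \<Rightarrow> real \<Rightarrow> real)
    \<Rightarrow> 'a::polish_space measure \<Rightarrow> 'b::polish_space measure \<Rightarrow> ('a \<times> 'b) measure \<Rightarrow> ereal" where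
  "UGW_obj \<phi> lam \<Delta> \<mu> \<nu> \<pi> =
     sint (\<pi> \<Otimes>\<^sub>M \<pi>) (\<lambda>((x, y), (x', y')). ereal (lam (\<Delta> (dist x x') (dist y y'))))
     + enn2ereal (D_phi_tensor \<phi> (distr \<pi> borel fst) \<mu>)
     + enn2ereal (D_phi_tensor \<phi> (distr \<pi> borel snd) \<nu>)"

definition UGW :: "(real \<Rightarrow> ennreal) \<Rightarrow> (real \<Rightarrow> real) \<Rightarrow> (real \<Rightarrow> real \<Rightarrow> real)
    \<Rightarrow> 'a::polish_space measure \<Rightarrow> 'b::polish_space measure \<Rightarrow> ereal" where
  "UGW \<phi> lam \<Delta> \<mu> \<nu> =
     (INF \<pi> \<in> {\<pi> :: ('a \<times> 'b) measure. sets \<pi> = sets borel \<and> finite_measure \<pi>}.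
        UGW_obj \<phi> lam \<Delta> \<mu> \<nu> \<pi>)"

definition psi :: "(real \<Rightarrow> ennreal) \<Rightarrow> real \<Rightarrow> ennreal" where
  "psi \<phi> r = (if r = 0 then phi_inf \<phi> else ennreal r * \<phi> (1 / r))"

definition L_c :: "(real \<Rightarrow> ennreal) \<Rightarrow> real \<Rightarrow> real \<Rightarrow> real \<Rightarrow> ereal" where
  "L_c \<phi> c r s = ereal c + enn2ereal (psi \<phi> r) + enn2ereal (psi \<phi> s)"

text \<open>H_c(r,s) = inf_{theta >= 0} theta L_c(r/theta, s/theta), value at theta = 0 being
  psi'_oo (r+s) = phi(0) (r+s).\<close>
definition H_c :: "(real \<Rightarrow> ennreal) \<Rightarrow> real \<Rightarrow> real \<Rightarrow> real \<Rightarrow> ereal" where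
  "H_c \<phi> c r s = (INF \<theta> \<in> {0..}.
     (if \<theta> = 0 then enn2ereal (\<phi> 0 * ennreal (r + s))
      else ereal \<theta> * L_c \<phi> c (r / \<theta>) (s / \<theta>)))"

text \<open>The q-th power of the cone distance on C[R_+]:
  D([a,u],[b,v])^q = H_{lam(Delta(a,b))}(u^p, v^p).\<close>
definition cone_D_pow_q :: "(real \<Rightarrow> ennreal) \<Rightarrow> (real \<Rightarrow> real) \<Rightarrow> (real \<Rightarrow> real \<Rightarrow> real) \<Rightarrow> real
    \<Rightarrow> real \<Rightarrow> real \<Rightarrow> real \<Rightarrow> real \<Rightarrow> ereal" where
  "cone_D_pow_q \<phi> lam \<Delta> p a u b v = H_c \<phi> (lam (\<Delta> a b)) (u powr p) (v powr p)"

text \<open>Measures on C[X] x C[Y] are represented by measures on (X x R) x (Y x R)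
  concentrated on (X x R_+) x (Y x R_+).\<close>
definition U_p :: "real \<Rightarrow> 'a::polish_space measure \<Rightarrow> 'b::polish_space measure
    \<Rightarrow> ((('a \<times> real) \<times> ('b \<times> real)) measure) set" where
  "U_p p \<mu> \<nu> = {\<alpha>. sets \<alpha> = sets borel \<and> finite_measure \<alpha> \<and>
      emeasure \<alpha> {((x, r), (y, s)). r < 0 \<or> s < 0} = 0 \<and>
      (\<forall>\<xi> :: 'a \<Rightarrow> real. continuous_on UNIV \<xi> \<and> bounded (range \<xi>) \<longrightarrow>
         integrable \<alpha> (\<lambda>((x, r), (y, s)). \<xi> x * r powr p) \<and>
         (\<integral>((x, r), (y, s)). \<xi> x * r powr p \<partial>\<alpha>) = (\<integral>x. \<xi> x \<partial>\<mu>)) \<and>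
      (\<forall>\<zeta> :: 'b \<Rightarrow> real. continuous_on UNIV \<zeta> \<and> bounded (range \<zeta>) \<longrightarrow>
         integrable \<alpha> (\<lambda>((x, r), (y, s)). \<zeta> y * s powr p) \<and>
         (\<integral>((x, r), (y, s)). \<zeta> y * s powr p \<partial>\<alpha>) = (\<integral>y. \<zeta> y \<partial>\<nu>))}"

definition CGW_obj :: "(real \<Rightarrow> ennreal) \<Rightarrow> (real \<Rightarrow> real) \<Rightarrow> (real \<Rightarrow> real \<Rightarrow> real) \<Rightarrow> real
    \<Rightarrow> (('a::metric_space \<times> real) \<times> ('b::metric_space \<times> real)) measure \<Rightarrow> ereal" where
  "CGW_obj \<phi> lam \<Delta> p \<alpha> =
     sint (\<alpha> \<Otimes>\<^sub>M \<alpha>) (\<lambda>(((x, r), (y, s)), ((x', r'), (y', s'))).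
        cone_D_pow_q \<phi> lam \<Delta> p (dist x x') (r * r') (dist y y') (s * s'))"

definition CGW :: "(real \<Rightarrow> ennreal) \<Rightarrow> (real \<Rightarrow> real) \<Rightarrow> (real \<Rightarrow> real \<Rightarrow> real) \<Rightarrow> real
    \<Rightarrow> 'a::polish_space measure \<Rightarrow> 'b::polish_space measure \<Rightarrow> ereal" where
  "CGW \<phi> lam \<Delta> p \<mu> \<nu> = (INF \<alpha> \<in> U_p p \<mu> \<nu>. CGW_obj \<phi> lam \<Delta> p \<alpha>)"

end

theory Submission
  imports Defs
begin

text \<open>Fix a plan \<open>\<pi>\<close> and write its marginals as \<open>\<pi>\<^sub>1 = f \<mu> + \<pi>\<^sub>1\<^sup>\<bottom>\<close>, \<open>\<pi>\<^sub>2 = g \<nu> + \<pi>\<^sub>2\<^sup>\<bottom>\<close>.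
  Lift \<open>\<pi>\<close> to the cones by \<open>(x, y) \<mapsto> ([x, f(x)\<^sup>-\<^sup>1\<^sup>/\<^sup>p], [y, g(y)\<^sup>-\<^sup>1\<^sup>/\<^sup>p])\<close> (radius \<open>0\<close> where the
  density vanishes) and add the parts of \<open>\<mu>\<close> and \<open>\<nu>\<close> where \<open>f\<close> resp. \<open>g\<close> vanishes, at radius \<open>1\<close>
  opposite the apex of the other cone. Since \<open>f r\<^sup>p = 1\<close> on \<open>{f > 0}\<close>, the resulting \<open>\<alpha>\<close> lies in
  \<open>U\<^sub>p(\<mu>, \<nu>)\<close>. On pairs of lifted points, \<open>\<theta> = 1\<close> in the definition of \<open>H\<^sub>c\<close> bounds the cone cost by the
  \<open>UGW\<close> integrand plus \<open>\<psi>((r r')\<^sup>p)\<close> for both cones; on all other pairs, \<open>\<theta> = 0\<close> bounds it by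
  \<open>\<phi>(0)\<close> times the radial masses. Since \<open>(f f') \<psi>(1 / (f f')) = \<phi>(f f')\<close>, these error terms add up to at
  most \<open>D\<^sub>\<phi>(\<pi>\<^sub>1 \<otimes> \<pi>\<^sub>1 | \<mu> \<otimes> \<mu>) + D\<^sub>\<phi>(\<pi>\<^sub>2 \<otimes> \<pi>\<^sub>2 | \<nu> \<otimes> \<nu>)\<close>: the singular part costs \<open>\<psi>(0) = \<phi>'\<^sub>\<infinity>\<close>
  per unit of mass and the region where a density vanishes costs \<open>\<phi>(0)\<close>. Hence the \<open>CGW\<close> cost of
  \<open>\<alpha>\<close> is at most the \<open>UGW\<close> cost of \<open>\<pi>\<close>.\<close>

section \<open>Sums and products of measures\<close>

definition add_measure :: "'a measure \<Rightarrow> 'a measure \<Rightarrow> 'a measure" where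
  "add_measure A B = measure_of (space A) (sets A) (\<lambda>X. emeasure A X + emeasure B X)"

lemma sets_add_measure [simp]: "sets (add_measure A B) = sets A"
  unfolding add_measure_def by (simp add: sets.space_closed)

lemma space_add_measure [simp]: "space (add_measure A B) = space A"
  unfolding add_measure_def by (simp add: sets.space_closed)

lemma measurable_add_measure [simp]:
  "measurable (add_measure A B) N = measurable A N" "measurable N (add_measure A B) = measurable N A"
  by (auto intro!: measurable_cong_sets)

lemma emeasure_add_measure:
  assumes "sets B = sets A" "X \<in> sets A"
  shows "emeasure (add_measure A B) X = emeasure A X + emeasure B X"
  unfolding add_measure_def
proof (rule emeasure_measure_of_sigma)
  show "sigma_algebra (space A) (sets A)" by (rule sets.sigma_algebra_axioms)
  show "positive (sets A) (\<lambda>X. emeasure A X + emeasure B X)" by (simp add: positive_def)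
  show "countably_additive (sets A) (\<lambda>X. emeasure A X + emeasure B X)"
    unfolding countably_additive_def
  proof safe
    fix F :: "nat \<Rightarrow> _" assume F: "range F \<subseteq> sets A" "disjoint_family F"
    then have "range F \<subseteq> sets B" using assms by auto
    then show "(\<Sum>i. emeasure A (F i) + emeasure B (F i)) = emeasure A (\<Union> (range F)) + emeasure B (\<Union> (range F))"
      using suminf_emeasure[OF F] suminf_emeasure[OF _ F(2)] by (simp add: suminf_add[symmetric])
  qed
qed fact

lemma add_measure_assoc:
  assumes "sets B = sets A" "sets C = sets A"
  shows "add_measure (add_measure A B) C = add_measure A (add_measure B C)"
  using assms by (intro measure_eqI) (auto simp: emeasure_add_measure add.assoc)

lemma finite_measure_add_measure:
  assumes "sets B = sets A" "finite_measure A" "finite_measure B"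
  shows "finite_measure (add_measure A B)"
proof (rule finite_measureI)
  have "space A \<in> sets A" by simp
  then show "emeasure (add_measure A B) (space (add_measure A B)) \<noteq> \<infinity>"
    using assms by (simp add: emeasure_add_measure finite_measure.emeasure_finite
        sets_eq_imp_space_eq[OF assms(1), symmetric])
qed

lemma simple_integral_add_measure:
  assumes "sets B = sets A" "simple_function A f"
  shows "integral\<^sup>S (add_measure A B) f = integral\<^sup>S A f + integral\<^sup>S B f"
proof -
  have "finite (f ` space A)" using assms(2) by (simp add: simple_function_def)
  moreover have "f -` {x} \<inter> space A \<in> sets A" for x using assms(2) by (rule simple_functionD)
  ultimately show ?thesis
    unfolding simple_integral_def
    by (simp add: sets_eq_imp_space_eq[OF assms(1)] emeasure_add_measure[OF assms(1)]
        distrib_left sum.distrib)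
qed

lemma nn_integral_add_measure:
  assumes sets: "sets B = sets A" and f: "f \<in> borel_measurable A"
  shows "integral\<^sup>N (add_measure A B) f = integral\<^sup>N A f + integral\<^sup>N B f"
proof -
  obtain U where U: "\<And>i. simple_function A (U i)" "incseq U" "\<And>i x. U i x < top"
    and sup: "\<And>x. (SUP i. U i x) = f x"
    using borel_measurable_implies_simple_function_sequence'[OF f] by blast
  have f_eq: "f = (\<lambda>x. SUP i. U i x)" using sup by auto
  have simple_B: "simple_function B (U i)" for i
    using U(1)[of i] sets by (simp add: simple_function_def sets_eq_imp_space_eq[OF sets])
  have simple_sum: "simple_function (add_measure A B) (U i)" for i
    using U(1)[of i] by (simp add: simple_function_def)
  have "U i \<in> borel_measurable A" "U i \<in> borel_measurable B" "U i \<in> borel_measurable (add_measure A B)" for i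
    using U(1) simple_B simple_sum by (auto intro: borel_measurable_simple_function)
  note U_meas = this
  have "integral\<^sup>N (add_measure A B) f = (SUP i. integral\<^sup>N (add_measure A B) (U i))"
    unfolding f_eq using U(2) U_meas(3) by (rule nn_integral_monotone_convergence_SUP)
  also have "\<dots> = (SUP i. integral\<^sup>N A (U i) + integral\<^sup>N B (U i))"
    using simple_sum U(1) simple_B
    by (simp add: nn_integral_eq_simple_integral simple_integral_add_measure[OF sets])
  also have "\<dots> = (SUP i. integral\<^sup>N A (U i)) + (SUP i. integral\<^sup>N B (U i))"
    by (rule ennreal_SUP_add) (auto intro!: incseq_nn_integral U(2))
  also have "\<dots> = integral\<^sup>N A f + integral\<^sup>N B f"
    unfolding f_eq using U(2) U_meas(1,2) by (simp add: nn_integral_monotone_convergence_SUP)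
  finally show ?thesis .
qed

lemma AE_add_measure:
  assumes "sets B = sets A" "AE x in A. Q x" "AE x in B. Q x"
  shows "AE x in add_measure A B. Q x"
proof -
  obtain N1 where N1: "{x\<in>space A. \<not> Q x} \<subseteq> N1" "N1 \<in> null_sets A"
    using assms(2) by (auto simp: eventually_ae_filter)
  obtain N2 where N2: "{x\<in>space B. \<not> Q x} \<subseteq> N2" "N2 \<in> null_sets B"
    using assms(3) by (auto simp: eventually_ae_filter)
  have "N1 \<inter> N2 \<in> null_sets A" "N1 \<inter> N2 \<in> null_sets B"
    using N1(2) N2(2) assms(1) by (auto intro: null_sets_subset)
  then have "N1 \<inter> N2 \<in> null_sets (add_measure A B)"
    using assms(1) by (simp add: null_sets_def emeasure_add_measure)
  moreover have "{x\<in>space (add_measure A B). \<not> Q x} \<subseteq> N1 \<inter> N2"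
    using N1(1) N2(1) sets_eq_imp_space_eq[OF assms(1)] by auto
  ultimately show ?thesis unfolding eventually_ae_filter by blast
qed

lemma integrable_add_measure:
  fixes f :: "'a \<Rightarrow> real"
  assumes "sets B = sets A"
  shows "integrable (add_measure A B) f \<longleftrightarrow> integrable A f \<and> integrable B f"
proof -
  have meas_B: "f \<in> borel_measurable B \<longleftrightarrow> f \<in> borel_measurable A"
    unfolding measurable_cong_sets[OF assms refl, of borel] ..
  show ?thesis
  proof (cases "f \<in> borel_measurable A")
    case True
    then have "(\<lambda>x. ennreal (norm (f x))) \<in> borel_measurable A" by measurable
    with True meas_B show ?thesis
      by (simp add: integrable_iff_bounded nn_integral_add_measure[OF assms])
  qed (use meas_B in \<open>simp add: integrable_iff_bounded\<close>)
qed

lemma integral_add_measure: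
  fixes f :: "'a \<Rightarrow> real"
  assumes sets: "sets B = sets A" and int_A: "integrable A f" and int_B: "integrable B f"
  shows "integral\<^sup>L (add_measure A B) f = integral\<^sup>L A f + integral\<^sup>L B f"
proof -
  have int: "integrable (add_measure A B) f" using integrable_add_measure[OF sets] int_A int_B by simp
  have meas: "(\<lambda>x. ennreal (f x)) \<in> borel_measurable A" "(\<lambda>x. ennreal (- f x)) \<in> borel_measurable A"
    using int_A by measurable
  have finite: "(\<integral>\<^sup>+x. ennreal (f x) \<partial>M) < top" "(\<integral>\<^sup>+x. ennreal (- f x) \<partial>M) < top"
    if "integrable M f" for M
  proof -
    have "(\<integral>\<^sup>+x. ennreal (f x) \<partial>M) \<le> (\<integral>\<^sup>+x. ennreal (norm (f x)) \<partial>M)"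
      "(\<integral>\<^sup>+x. ennreal (- f x) \<partial>M) \<le> (\<integral>\<^sup>+x. ennreal (norm (f x)) \<partial>M)"
      by (intro nn_integral_mono; simp)+
    moreover have "(\<integral>\<^sup>+x. ennreal (norm (f x)) \<partial>M) < top" using that by (simp add: integrable_iff_bounded)
    ultimately show "(\<integral>\<^sup>+x. ennreal (f x) \<partial>M) < top" "(\<integral>\<^sup>+x. ennreal (- f x) \<partial>M) < top"
      by (auto dest: le_less_trans)
  qed
  show ?thesis
    using finite[OF int_A] finite[OF int_B]
    by (simp add: real_lebesgue_integral_def[OF int] real_lebesgue_integral_def[OF int_A]
        real_lebesgue_integral_def[OF int_B] nn_integral_add_measure[OF sets meas(1)]
        nn_integral_add_measure[OF sets meas(2)] enn2real_plus)
qed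

lemma pair_measure_add_measure_left:
  assumes sets: "sets B = sets A" and "sigma_finite_measure C"
  shows "add_measure A B \<Otimes>\<^sub>M C = add_measure (A \<Otimes>\<^sub>M C) (B \<Otimes>\<^sub>M C)"
proof (rule measure_eqI)
  interpret C: sigma_finite_measure C by fact
  have sets_BC: "sets (B \<Otimes>\<^sub>M C) = sets (A \<Otimes>\<^sub>M C)" using sets by (intro sets_pair_measure_cong) auto
  have sets_sum: "sets (add_measure A B \<Otimes>\<^sub>M C) = sets (A \<Otimes>\<^sub>M C)" by (intro sets_pair_measure_cong) auto
  then show "sets (add_measure A B \<Otimes>\<^sub>M C) = sets (add_measure (A \<Otimes>\<^sub>M C) (B \<Otimes>\<^sub>M C))" by simp
  fix X assume "X \<in> sets (add_measure A B \<Otimes>\<^sub>M C)"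
  then have X: "X \<in> sets (A \<Otimes>\<^sub>M C)" "X \<in> sets (B \<Otimes>\<^sub>M C)" using sets_sum sets_BC by auto
  have "emeasure (add_measure A B \<Otimes>\<^sub>M C) X = \<integral>\<^sup>+x. emeasure C (Pair x -` X) \<partial>add_measure A B"
    using X sets_sum by (intro C.emeasure_pair_measure_alt) auto
  also have "\<dots> = (\<integral>\<^sup>+x. emeasure C (Pair x -` X) \<partial>A) + (\<integral>\<^sup>+x. emeasure C (Pair x -` X) \<partial>B)"
    using sets X(1) by (intro nn_integral_add_measure C.measurable_emeasure_Pair)
  also have "\<dots> = emeasure (add_measure (A \<Otimes>\<^sub>M C) (B \<Otimes>\<^sub>M C)) X"
    using X sets_BC by (simp add: C.emeasure_pair_measure_alt emeasure_add_measure)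
  finally show "emeasure (add_measure A B \<Otimes>\<^sub>M C) X = emeasure (add_measure (A \<Otimes>\<^sub>M C) (B \<Otimes>\<^sub>M C)) X" .
qed

lemma pair_measure_add_measure_right:
  assumes sets: "sets B = sets A" and "finite_measure A" "finite_measure B"
  shows "C \<Otimes>\<^sub>M add_measure A B = add_measure (C \<Otimes>\<^sub>M A) (C \<Otimes>\<^sub>M B)"
proof (rule measure_eqI)
  interpret A: finite_measure A by fact
  interpret B: finite_measure B by fact
  interpret S: finite_measure "add_measure A B" using finite_measure_add_measure assms .
  have sets_CB: "sets (C \<Otimes>\<^sub>M B) = sets (C \<Otimes>\<^sub>M A)" using sets by (intro sets_pair_measure_cong) auto
  have sets_sum: "sets (C \<Otimes>\<^sub>M add_measure A B) = sets (C \<Otimes>\<^sub>M A)" by (intro sets_pair_measure_cong) auto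
  then show "sets (C \<Otimes>\<^sub>M add_measure A B) = sets (add_measure (C \<Otimes>\<^sub>M A) (C \<Otimes>\<^sub>M B))" by simp
  fix X assume "X \<in> sets (C \<Otimes>\<^sub>M add_measure A B)"
  then have X: "X \<in> sets (C \<Otimes>\<^sub>M A)" "X \<in> sets (C \<Otimes>\<^sub>M B)" using sets_sum sets_CB by auto
  have "emeasure (C \<Otimes>\<^sub>M add_measure A B) X = \<integral>\<^sup>+x. emeasure (add_measure A B) (Pair x -` X) \<partial>C"
    using X sets_sum by (intro S.emeasure_pair_measure_alt) auto
  also have "\<dots> = \<integral>\<^sup>+x. emeasure A (Pair x -` X) + emeasure B (Pair x -` X) \<partial>C"
    using X(1) by (intro nn_integral_cong) (simp add: emeasure_add_measure[OF sets] sets_Pair1)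
  also have "\<dots> = emeasure (add_measure (C \<Otimes>\<^sub>M A) (C \<Otimes>\<^sub>M B)) X"
    using X sets_CB by (simp add: nn_integral_add A.measurable_emeasure_Pair B.measurable_emeasure_Pair
        A.emeasure_pair_measure_alt B.emeasure_pair_measure_alt emeasure_add_measure)
  finally show "emeasure (C \<Otimes>\<^sub>M add_measure A B) X = emeasure (add_measure (C \<Otimes>\<^sub>M A) (C \<Otimes>\<^sub>M B)) X" .
qed

lemma nn_integral_pair_measure_mult:
  assumes "sigma_finite_measure N" "u \<in> borel_measurable M" "v \<in> borel_measurable N"
  shows "(\<integral>\<^sup>+z. u (fst z) * v (snd z) \<partial>(M \<Otimes>\<^sub>M N)) = integral\<^sup>N M u * integral\<^sup>N N v"
proof -
  interpret N: sigma_finite_measure N by fact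
  have "(\<integral>\<^sup>+z. u (fst z) * v (snd z) \<partial>(M \<Otimes>\<^sub>M N)) = \<integral>\<^sup>+x. \<integral>\<^sup>+y. u x * v y \<partial>N \<partial>M"
    using assms by (subst N.nn_integral_fst[symmetric]) (auto simp: case_prod_beta)
  also have "\<dots> = integral\<^sup>N M u * integral\<^sup>N N v"
    using assms by (simp add: nn_integral_cmult nn_integral_multc)
  finally show ?thesis .
qed

lemma AE_pair_measure_fst_snd:
  assumes "finite_measure X" "finite_measure Y" "AE x in X. Q x" "AE y in Y. Q y"
    "{z \<in> space (X \<Otimes>\<^sub>M Y). Q (fst z) \<and> Q (snd z)} \<in> sets (X \<Otimes>\<^sub>M Y)"
  shows "AE z in X \<Otimes>\<^sub>M Y. Q (fst z) \<and> Q (snd z)"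
proof -
  interpret X: finite_measure X by fact
  interpret Y: finite_measure Y by fact
  interpret XY: pair_sigma_finite X Y by unfold_locales
  show ?thesis
  proof (rule XY.AE_pair_measure[OF assms(5)])
    show "AE x in X. AE y in Y. Q (fst (x, y)) \<and> Q (snd (x, y))"
      using assms(3) by eventually_elim (use assms(4) in auto)
  qed
qed

section \<open>Signed integrals along a lift\<close>

text \<open>The integrands compared here need not be measurable (nothing is assumed of \<open>lam\<close>), so
  their integrals are suprema over simple minorants; bounds are first proved for measurable
  finite minorants.\<close>

lemma nn_integral_le_by_measurable:
  assumes "\<And>g. g \<in> borel_measurable M \<Longrightarrow> g \<le> f \<Longrightarrow> (\<forall>x. g x < top) \<Longrightarrow> integral\<^sup>N M g \<le> c"
  shows "integral\<^sup>N M f \<le> c"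
  unfolding nn_integral_def_finite
proof (rule SUP_least)
  fix g assume "g \<in> {g. simple_function M g \<and> g \<le> f \<and> (\<forall>x. g x < top)}"
  then show "integral\<^sup>S M g \<le> c"
    using assms[of g] by (simp add: borel_measurable_simple_function nn_integral_eq_simple_integral)
qed

lemma nn_integral_add_le_by_measurable:
  assumes "\<And>g h. g \<in> borel_measurable M \<Longrightarrow> g \<le> f \<Longrightarrow> (\<forall>x. g x < top) \<Longrightarrow>
     h \<in> borel_measurable M' \<Longrightarrow> h \<le> f' \<Longrightarrow> (\<forall>x. h x < top) \<Longrightarrow>
     integral\<^sup>N M g + integral\<^sup>N M' h \<le> c"
  shows "integral\<^sup>N M f + integral\<^sup>N M' f' \<le> c"
proof -
  let ?S = "{g. simple_function M g \<and> g \<le> f \<and> (\<forall>x. g x < top)}"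
  let ?S' = "{h. simple_function M' h \<and> h \<le> f' \<and> (\<forall>x. h x < top)}"
  have "(\<lambda>_. 0) \<in> ?S" "(\<lambda>_. 0) \<in> ?S'" by (auto simp: le_fun_def)
  then have nonempty: "?S \<noteq> {}" "?S' \<noteq> {}" by blast+
  have "integral\<^sup>N M f + integral\<^sup>N M' f' = (SUP g\<in>?S. integral\<^sup>S M g) + (SUP h\<in>?S'. integral\<^sup>S M' h)"
    unfolding nn_integral_def_finite ..
  also have "\<dots> = (SUP g\<in>?S. integral\<^sup>S M g + (SUP h\<in>?S'. integral\<^sup>S M' h))"
    using nonempty(1) by (rule ennreal_SUP_add_left[symmetric])
  also have "\<dots> = (SUP g\<in>?S. SUP h\<in>?S'. integral\<^sup>S M g + integral\<^sup>S M' h)"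
    using nonempty(2) by (simp add: ennreal_SUP_add_right)
  also have "\<dots> \<le> c"
  proof (intro SUP_least)
    fix g h assume "g \<in> ?S" "h \<in> ?S'"
    then show "integral\<^sup>S M g + integral\<^sup>S M' h \<le> c"
      using assms[of g h] by (simp add: borel_measurable_simple_function nn_integral_eq_simple_integral)
  qed
  finally show ?thesis .
qed

lemma e2ennreal_MInfty [simp]: "e2ennreal (- \<infinity>) = 0"
  by (simp add: e2ennreal_neg)

lemma top_le_ennreal_iff [simp]: "top \<le> ennreal r \<longleftrightarrow> False"
  by (simp add: top_unique)

lemma ennreal_diff_le_e2ennreal:
  fixes g a :: ennreal and H L :: ereal
  assumes "g \<le> e2ennreal H" "H \<le> L + enn2ereal a" "g < top"
  shows "g - a \<le> e2ennreal L"
  using assms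
  by (cases g rule: ennreal_cases; cases a rule: ennreal_cases; cases H; cases L)
    (auto simp: ennreal_minus ennreal_le_iff2 ennreal_neg split: if_splits)

lemma ennreal_diff_le_e2ennreal_uminus:
  fixes h a :: ennreal and H L :: ereal
  assumes "h \<le> e2ennreal (- L)" "H \<le> L + enn2ereal a" "h < top"
  shows "h - a \<le> e2ennreal (- H)"
  using assms
  by (cases h rule: ennreal_cases; cases a rule: ennreal_cases; cases H; cases L)
    (auto simp: ennreal_minus ennreal_le_iff2 ennreal_neg split: if_splits)

lemma ennreal_add_le_diff_add_diff:
  fixes g h a :: ennreal and H L :: ereal
  assumes "g \<le> e2ennreal H" "h \<le> e2ennreal (- L)" "H \<le> L + enn2ereal a"
  shows "g + h \<le> (g - a) + (h - a) + a"
proof -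
  have le_split: "ennreal r \<le> ennreal (r - b) + ennreal b" if "0 \<le> b" for r b :: real
  proof (cases "r \<le> b")
    case True
    then have "ennreal r \<le> ennreal b" by (rule ennreal_leI)
    then show ?thesis by (simp add: add_increasing)
  qed (use that in \<open>auto simp: ennreal_plus[symmetric] simp del: ennreal_plus\<close>)
  show ?thesis
    using assms
    by (cases g rule: ennreal_cases; cases h rule: ennreal_cases; cases a rule: ennreal_cases;
        cases H; cases L)
      (auto simp: le_split ennreal_minus ennreal_le_iff2 ennreal_neg
        ennreal_plus[symmetric] simp del: ennreal_plus split: if_splits)
qed

lemma sint_le_add:
  fixes M :: "'a measure" and M' :: "'b measure" and H :: "'a \<Rightarrow> ereal" and L :: "'b \<Rightarrow> ereal"
    and C :: ennreal
  defines "PH \<equiv> \<integral>\<^sup>+x. e2ennreal (H x) \<partial>M" and "NH \<equiv> \<integral>\<^sup>+x. e2ennreal (- H x) \<partial>M"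
    and "PL \<equiv> \<integral>\<^sup>+x. e2ennreal (L x) \<partial>M'" and "NL \<equiv> \<integral>\<^sup>+x. e2ennreal (- L x) \<partial>M'"
  assumes "PH + NL \<le> PL + NH + C" "PH \<le> PL + C" "NL \<le> NH + C"
  shows "sint M H \<le> sint M' L + enn2ereal C"
  using assms(5-) unfolding sint_def Let_def PH_def[symmetric] NH_def[symmetric] PL_def[symmetric]
    NL_def[symmetric]
  by (cases PH rule: ennreal_cases; cases NH rule: ennreal_cases; cases PL rule: ennreal_cases;
      cases NL rule: ennreal_cases; cases C rule: ennreal_cases)
    (auto simp: ennreal_plus[symmetric] simp del: ennreal_plus)

locale dominated_lift =
  fixes M :: "'z measure" and N R :: "'w measure" and T :: "'z \<Rightarrow> 'w" and Pj :: "'w \<Rightarrow> 'z"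
    and H :: "'w \<Rightarrow> ereal" and L :: "'z \<Rightarrow> ereal" and A B :: "'w \<Rightarrow> ennreal"
  assumes T: "T \<in> M \<rightarrow>\<^sub>M N" and Pj: "Pj \<in> N \<rightarrow>\<^sub>M M" and Pj_T: "\<And>z. Pj (T z) = z"
    and sets_R: "sets R = sets N" and A: "A \<in> borel_measurable N"
    and H_le_L: "\<And>w. H w \<le> L (Pj w) + enn2ereal (A w)"
    and H_le_B: "AE w in R. H w \<le> enn2ereal (B w)"
begin

definition total_measure :: "'w measure" where "total_measure = add_measure (distr M N T) R"

definition error_term :: ennreal where "error_term = integral\<^sup>N M (\<lambda>z. A (T z)) + integral\<^sup>N R B"

lemma measurable_total: "measurable total_measure X = measurable N X"
  unfolding total_measure_def by (intro measurable_cong_sets) auto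

lemma nn_integral_total:
  "k \<in> borel_measurable N \<Longrightarrow> integral\<^sup>N total_measure k = integral\<^sup>N M (\<lambda>z. k (T z)) + integral\<^sup>N R k"
  unfolding total_measure_def using T sets_R by (simp add: nn_integral_add_measure nn_integral_distr)

lemma measurable_A_T: "(\<lambda>z. A (T z)) \<in> borel_measurable M"
  using A T by measurable

lemma nn_integral_rest_le:
  assumes "g \<le> (\<lambda>w. e2ennreal (H w))"
  shows "integral\<^sup>N R g \<le> integral\<^sup>N R B"
proof (intro nn_integral_mono_AE)
  show "AE w in R. g w \<le> B w"
    using H_le_B
  proof eventually_elim
    case (elim w)
    have "g w \<le> e2ennreal (H w)" using assms by (simp add: le_fun_def)
    also have "\<dots> \<le> B w" using e2ennreal_mono[OF elim] by simp
    finally show ?case .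
  qed
qed

lemma nn_integral_le_diff_add:
  assumes "f \<in> borel_measurable M"
  shows "integral\<^sup>N M f \<le> integral\<^sup>N M (\<lambda>z. f z - A (T z)) + integral\<^sup>N M (\<lambda>z. A (T z))"
proof -
  have "integral\<^sup>N M f \<le> integral\<^sup>N M (\<lambda>z. (f z - A (T z)) + A (T z))"
    by (intro nn_integral_mono) (simp add: diff_add_self_ennreal nle_le)
  also have "\<dots> = integral\<^sup>N M (\<lambda>z. f z - A (T z)) + integral\<^sup>N M (\<lambda>z. A (T z))"
    using assms measurable_A_T by (intro nn_integral_add) measurable
  finally show ?thesis .
qed

lemma nn_integral_lift_diff_le_pos:
  assumes "g \<le> (\<lambda>w. e2ennreal (H w))" "\<forall>w. g w < top"
  shows "integral\<^sup>N M (\<lambda>z. g (T z) - A (T z)) \<le> (\<integral>\<^sup>+z. e2ennreal (L z) \<partial>M)"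
  using assms H_le_L[of "T _"]
  by (intro nn_integral_mono ennreal_diff_le_e2ennreal) (auto simp: le_fun_def Pj_T)

lemma nn_integral_diff_le_neg:
  assumes h: "h \<in> borel_measurable M" "h \<le> (\<lambda>z. e2ennreal (- L z))" "\<forall>z. h z < top"
  shows "integral\<^sup>N M (\<lambda>z. h z - A (T z)) \<le> (\<integral>\<^sup>+w. e2ennreal (- H w) \<partial>total_measure)"
proof -
  define k where "k w = h (Pj w) - A w" for w
  have k: "k \<in> borel_measurable N" unfolding k_def using h(1) Pj A by measurable
  have "integral\<^sup>N M (\<lambda>z. h z - A (T z)) = integral\<^sup>N M (\<lambda>z. k (T z))" by (simp add: k_def Pj_T)
  also have "\<dots> \<le> integral\<^sup>N total_measure k" by (simp add: nn_integral_total[OF k])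
  also have "\<dots> \<le> (\<integral>\<^sup>+w. e2ennreal (- H w) \<partial>total_measure)"
    unfolding k_def using h(2,3) H_le_L
    by (intro nn_integral_mono ennreal_diff_le_e2ennreal_uminus) (auto simp: le_fun_def)
  finally show ?thesis .
qed

lemma pos_part_le:
  "(\<integral>\<^sup>+w. e2ennreal (H w) \<partial>total_measure) \<le> (\<integral>\<^sup>+z. e2ennreal (L z) \<partial>M) + error_term"
proof (rule nn_integral_le_by_measurable)
  fix g assume g: "g \<in> borel_measurable total_measure" "g \<le> (\<lambda>w. e2ennreal (H w))" "\<forall>w. g w < top"
  have gT: "(\<lambda>z. g (T z)) \<in> borel_measurable M" using g(1) T by (simp add: measurable_total)
  have "integral\<^sup>N total_measure g = integral\<^sup>N M (\<lambda>z. g (T z)) + integral\<^sup>N R g"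
    using g(1) by (simp add: measurable_total nn_integral_total)
  also have "\<dots> \<le> ((\<integral>\<^sup>+z. e2ennreal (L z) \<partial>M) + integral\<^sup>N M (\<lambda>z. A (T z))) + integral\<^sup>N R B"
    using nn_integral_le_diff_add[OF gT] nn_integral_lift_diff_le_pos[OF g(2,3)] nn_integral_rest_le[OF g(2)]
    by (intro add_mono order_trans[OF nn_integral_le_diff_add[OF gT]] add_right_mono) auto
  finally show "integral\<^sup>N total_measure g \<le> (\<integral>\<^sup>+z. e2ennreal (L z) \<partial>M) + error_term"
    by (simp add: error_term_def ac_simps)
qed

lemma neg_part_le:
  "(\<integral>\<^sup>+z. e2ennreal (- L z) \<partial>M) \<le> (\<integral>\<^sup>+w. e2ennreal (- H w) \<partial>total_measure) + error_term"
proof (rule nn_integral_le_by_measurable)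
  fix h assume h: "h \<in> borel_measurable M" "h \<le> (\<lambda>z. e2ennreal (- L z))" "\<forall>z. h z < top"
  have "integral\<^sup>N M h \<le> (\<integral>\<^sup>+w. e2ennreal (- H w) \<partial>total_measure) + integral\<^sup>N M (\<lambda>z. A (T z))"
    using nn_integral_le_diff_add[OF h(1)] nn_integral_diff_le_neg[OF h]
    by (auto intro: order_trans add_right_mono)
  then show "integral\<^sup>N M h \<le> (\<integral>\<^sup>+w. e2ennreal (- H w) \<partial>total_measure) + error_term"
    by (rule order_trans) (simp add: error_term_def add_left_mono ac_simps)
qed

lemma pos_neg_parts_le:
  "(\<integral>\<^sup>+w. e2ennreal (H w) \<partial>total_measure) + (\<integral>\<^sup>+z. e2ennreal (- L z) \<partial>M)
    \<le> (\<integral>\<^sup>+z. e2ennreal (L z) \<partial>M) + (\<integral>\<^sup>+w. e2ennreal (- H w) \<partial>total_measure) + error_term"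
proof (rule nn_integral_add_le_by_measurable)
  fix g h assume g: "g \<in> borel_measurable total_measure" "g \<le> (\<lambda>w. e2ennreal (H w))" "\<forall>w. g w < top"
    and h: "h \<in> borel_measurable M" "h \<le> (\<lambda>z. e2ennreal (- L z))" "\<forall>z. h z < top"
  have gT: "(\<lambda>z. g (T z)) \<in> borel_measurable M" using g(1) T by (simp add: measurable_total)
  have diff_meas: "(\<lambda>z. g (T z) - A (T z)) \<in> borel_measurable M" "(\<lambda>z. h z - A (T z)) \<in> borel_measurable M"
    using gT h(1) measurable_A_T by measurable
  have "integral\<^sup>N M (\<lambda>z. g (T z)) + integral\<^sup>N M h = integral\<^sup>N M (\<lambda>z. g (T z) + h z)"
    using gT h(1) by (intro nn_integral_add[symmetric]) auto
  also have "\<dots> \<le> integral\<^sup>N M (\<lambda>z. ((g (T z) - A (T z)) + (h z - A (T z))) + A (T z))"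
    using g(2) h(2) H_le_L[of "T _"]
    by (intro nn_integral_mono ennreal_add_le_diff_add_diff) (auto simp: le_fun_def Pj_T)
  also have "\<dots> = integral\<^sup>N M (\<lambda>z. g (T z) - A (T z)) + integral\<^sup>N M (\<lambda>z. h z - A (T z))
      + integral\<^sup>N M (\<lambda>z. A (T z))"
    using diff_meas measurable_A_T by (simp add: nn_integral_add)
  also have "\<dots> \<le> (\<integral>\<^sup>+z. e2ennreal (L z) \<partial>M) + (\<integral>\<^sup>+w. e2ennreal (- H w) \<partial>total_measure) + integral\<^sup>N M (\<lambda>z. A (T z))"
    by (intro add_mono order_refl nn_integral_lift_diff_le_pos[OF g(2,3)] nn_integral_diff_le_neg[OF h])
  finally have lifted: "integral\<^sup>N M (\<lambda>z. g (T z)) + integral\<^sup>N M h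
      \<le> (\<integral>\<^sup>+z. e2ennreal (L z) \<partial>M) + (\<integral>\<^sup>+w. e2ennreal (- H w) \<partial>total_measure) + integral\<^sup>N M (\<lambda>z. A (T z))" .
  have "integral\<^sup>N total_measure g + integral\<^sup>N M h = (integral\<^sup>N M (\<lambda>z. g (T z)) + integral\<^sup>N M h) + integral\<^sup>N R g"
    using g(1) by (simp add: measurable_total nn_integral_total ac_simps)
  also have "\<dots> \<le> ((\<integral>\<^sup>+z. e2ennreal (L z) \<partial>M) + (\<integral>\<^sup>+w. e2ennreal (- H w) \<partial>total_measure)
      + integral\<^sup>N M (\<lambda>z. A (T z))) + integral\<^sup>N R B"
    using lifted nn_integral_rest_le[OF g(2)] by (rule add_mono)
  finally show "integral\<^sup>N total_measure g + integral\<^sup>N M h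
      \<le> (\<integral>\<^sup>+z. e2ennreal (L z) \<partial>M) + (\<integral>\<^sup>+w. e2ennreal (- H w) \<partial>total_measure) + error_term"
    by (simp add: error_term_def ac_simps)
qed

lemma sint_total_le: "sint total_measure H \<le> sint M L + enn2ereal error_term"
  by (rule sint_le_add[OF pos_neg_parts_le pos_part_le neg_part_le])

end

lemma sint_add_measure_distr_le:
  assumes "T \<in> M \<rightarrow>\<^sub>M N" "Pj \<in> N \<rightarrow>\<^sub>M M" "\<And>z. Pj (T z) = z" "sets R = sets N" "A \<in> borel_measurable N"
    "\<And>w. H w \<le> L (Pj w) + enn2ereal (A w)" "AE w in R. H w \<le> enn2ereal (B w)"
  shows "sint (add_measure (distr M N T) R) H
    \<le> sint M L + enn2ereal (integral\<^sup>N M (\<lambda>z. A (T z)) + integral\<^sup>N R B)"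
proof -
  interpret dominated_lift M N R T Pj H L A B using assms by unfold_locales
  show ?thesis using sint_total_le by (simp add: total_measure_def error_term_def)
qed

section \<open>Lebesgue decomposition and Csiszar divergences\<close>

lemma ennreal_mult_enn2real_divide:
  "(k::ennreal) \<noteq> 0 \<Longrightarrow> k \<noteq> \<infinity> \<Longrightarrow> h \<noteq> \<infinity> \<Longrightarrow> k * ennreal (enn2real (h / k)) = h"
  by (metis divide_eq_1_ennreal ennreal_divide_eq_0_iff ennreal_divide_eq_top_iff
      ennreal_divide_times ennreal_enn2real_if infinity_ennreal_def mult_divide_eq_ennreal)

lemma emeasure_density_ratio:
  assumes k: "k \<in> borel_measurable K" "density K k = M"
    and h: "h \<in> borel_measurable K" "density K h = P"
    and finite: "AE x in K. h x \<noteq> \<infinity>" "AE x in K. k x \<noteq> \<infinity>"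
    and A: "A \<in> sets K"
  defines "f \<equiv> \<lambda>x. if k x = 0 then 0 else enn2real (h x / k x)"
  shows "emeasure P A = (\<integral>\<^sup>+x\<in>A. ennreal (f x) \<partial>M) + emeasure P (A \<inter> {x\<in>space K. k x = 0})"
proof -
  define Z where "Z = {x\<in>space K. k x = 0}"
  have Z: "Z \<in> sets K" unfolding Z_def using k(1) by measurable
  have sets: "sets P = sets K" "sets M = sets K" using h(2) k(2) by auto
  have "emeasure P A = emeasure P (A \<inter> Z) + emeasure P (A - Z)"
    using A Z sets by (subst plus_emeasure) (auto intro!: arg_cong[where f="emeasure P"])
  moreover have "emeasure P (A - Z) = \<integral>\<^sup>+x. h x * indicator (A - Z) x \<partial>K"
    using h A Z by (metis emeasure_density sets.Diff)
  moreover have "(\<integral>\<^sup>+x\<in>A. ennreal (f x) \<partial>M) = \<integral>\<^sup>+x. k x * (ennreal (f x) * indicator A x) \<partial>K"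
    unfolding k(2)[symmetric] using k(1) h(1) A
    by (intro nn_integral_density) (auto simp: f_def)
  moreover have "(\<integral>\<^sup>+x. k x * (ennreal (f x) * indicator A x) \<partial>K) = \<integral>\<^sup>+x. h x * indicator (A - Z) x \<partial>K"
  proof (rule nn_integral_cong_AE)
    show "AE x in K. k x * (ennreal (f x) * indicator A x) = h x * indicator (A - Z) x"
      using finite
    proof eventually_elim
      case (elim x)
      show ?case
      proof (cases "x \<in> space K \<and> k x \<noteq> 0")
        case True
        then show ?thesis using elim
          by (simp add: f_def Z_def indicator_def ennreal_mult_enn2real_divide mult.assoc[symmetric])
      next
        case False
        then show ?thesis using sets.sets_into_space[OF A] by (auto simp: Z_def indicator_def)
      qed
    qed
  qed
  ultimately show ?thesis by (simp add: Z_def add.commute)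
qed

locale lebesgue_decomposition =
  fixes M P :: "'a measure" and f :: "'a \<Rightarrow> real" and N :: "'a set"
  assumes finite_M: "finite_measure M" and finite_P: "finite_measure P"
    and sets_P: "sets P = sets M"
    and density_measurable: "f \<in> borel_measurable M"
    and density_nonneg: "\<And>x. 0 \<le> f x"
    and null_set: "N \<in> sets M" "emeasure M N = 0"
    and density_null: "\<And>x. x \<in> N \<Longrightarrow> f x = 0"
    and decomposition:
      "\<And>A. A \<in> sets M \<Longrightarrow> emeasure P A = (\<integral>\<^sup>+x\<in>A. ennreal (f x) \<partial>M) + emeasure P (A \<inter> N)"

lemma lebesgue_decomposition_exists:
  assumes finite_M: "finite_measure M" and finite_P: "finite_measure P" and sets: "sets P = sets M"
  shows "\<exists>f N. lebesgue_decomposition M P f N"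
proof -
  define K where "K = add_measure M P"
  have finite_K: "finite_measure K"
    unfolding K_def using sets finite_M finite_P by (rule finite_measure_add_measure)
  have sets_K: "sets K = sets M" unfolding K_def by simp
  have emeasure_K: "emeasure K A = emeasure M A + emeasure P A" if "A \<in> sets M" for A
    unfolding K_def using sets that by (rule emeasure_add_measure)
  have "absolutely_continuous K M" "absolutely_continuous K P"
    unfolding absolutely_continuous_def using emeasure_K by (auto simp: null_sets_def sets_K sets)
  then obtain k h where k: "k \<in> borel_measurable K" "density K k = M"
    and h: "h \<in> borel_measurable K" "density K h = P"
    using finite_measure.Radon_Nikodym_finite_measure[OF finite_K finite_M]
      finite_measure.Radon_Nikodym_finite_measure[OF finite_K finite_P] sets_K sets by metis
  have finite_density: "AE x in K. g x \<noteq> \<infinity>"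
    if "g \<in> borel_measurable K" "finite_measure (density K g)" for g
  proof (rule nn_integral_PInf_AE[OF that(1)])
    show "integral\<^sup>N K g \<noteq> \<infinity>"
      using that finite_measure.emeasure_finite[OF that(2), of "space K"] by (simp add: emeasure_density)
  qed
  have k_M: "k \<in> borel_measurable M" and h_M: "h \<in> borel_measurable M"
    using k(1) h(1) measurable_cong_sets[OF sets_K refl] by blast+
  define f where "f x = (if k x = 0 then 0 else enn2real (h x / k x))" for x
  define N where "N = {x\<in>space K. k x = 0}"
  have "lebesgue_decomposition M P f N"
  proof (rule lebesgue_decomposition.intro)
    show "f \<in> borel_measurable M" "N \<in> sets M"
      unfolding f_def N_def using k_M h_M by (measurable, simp add: K_def)
    show "emeasure M N = 0"
    proof -
      have "emeasure M N = \<integral>\<^sup>+x. k x * indicator N x \<partial>K"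
        using k \<open>N \<in> sets M\<close> sets_K by (metis emeasure_density)
      also have "\<dots> = \<integral>\<^sup>+x. 0 \<partial>K" by (intro nn_integral_cong) (simp add: N_def indicator_def)
      finally show ?thesis by simp
    qed
    have "AE x in K. h x \<noteq> \<infinity>" "AE x in K. k x \<noteq> \<infinity>"
      using finite_density[OF h(1)] finite_density[OF k(1)] h(2) k(2) finite_M finite_P by simp_all
    then show "emeasure P A = (\<integral>\<^sup>+x\<in>A. ennreal (f x) \<partial>M) + emeasure P (A \<inter> N)" if "A \<in> sets M" for A
      unfolding f_def N_def using emeasure_density_ratio[OF k h, of A] that sets_K by simp
  qed (use finite_M finite_P sets in \<open>simp_all add: f_def N_def\<close>)
  then show ?thesis by blast
qed

lemma finite_measure_density_indicator:
  assumes "finite_measure M" "A \<in> sets M"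
  shows "finite_measure (density M (indicator A))"
proof (rule finite_measureI)
  show "emeasure (density M (indicator A)) (space (density M (indicator A))) \<noteq> \<infinity>"
    using assms by (simp add: emeasure_restricted finite_measure.emeasure_finite)
qed

lemma leb_decomp_set_nn_integral_eq:
  assumes f: "leb_decomp \<beta> \<alpha> f s" and g: "leb_decomp \<beta> \<alpha> g t" and A: "A \<in> sets \<beta>"
  shows "(\<integral>\<^sup>+x\<in>A. ennreal (f x) \<partial>\<beta>) = (\<integral>\<^sup>+x\<in>A. ennreal (g x) \<partial>\<beta>)"
proof -
  obtain N1 where N1: "N1 \<in> sets \<beta>" "emeasure \<beta> N1 = 0" "emeasure s (space \<beta> - N1) = 0"
    using f unfolding leb_decomp_def by blast
  obtain N2 where N2: "N2 \<in> sets \<beta>" "emeasure \<beta> N2 = 0" "emeasure t (space \<beta> - N2) = 0"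
    using g unfolding leb_decomp_def by blast
  have sets: "sets s = sets \<beta>" "sets t = sets \<beta>" using f g unfolding leb_decomp_def by blast+
  define Z where "Z = N1 \<union> N2"
  have Z: "Z \<in> sets \<beta>" "emeasure \<beta> Z = 0" unfolding Z_def using N1 N2
    by (auto simp: emeasure_Un_null_set null_sets_def)
  have "emeasure s (A - Z) \<le> emeasure s (space \<beta> - N1)" "emeasure t (A - Z) \<le> emeasure t (space \<beta> - N2)"
    using A Z N1 N2 sets sets.sets_into_space[OF A] by (intro emeasure_mono; force simp: Z_def)+
  then have singular: "emeasure s (A - Z) = 0" "emeasure t (A - Z) = 0" using N1 N2 by simp_all
  have "AE x in \<beta>. x \<notin> Z" using Z by (intro AE_not_in) auto
  then have "(\<integral>\<^sup>+x\<in>A. ennreal (f x) \<partial>\<beta>) = (\<integral>\<^sup>+x\<in>A - Z. ennreal (f x) \<partial>\<beta>)"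
    "(\<integral>\<^sup>+x\<in>A. ennreal (g x) \<partial>\<beta>) = (\<integral>\<^sup>+x\<in>A - Z. ennreal (g x) \<partial>\<beta>)"
    by (intro nn_integral_cong_AE; auto simp: indicator_def)+
  moreover have "A - Z \<in> sets \<beta>" using A Z by auto
  ultimately show ?thesis
    using f g singular unfolding leb_decomp_def by (metis add.right_neutral)
qed

lemma leb_decomp_unique:
  assumes finite_\<alpha>: "finite_measure \<alpha>" and finite_\<beta>: "finite_measure \<beta>"
    and f: "leb_decomp \<beta> \<alpha> f s" and g: "leb_decomp \<beta> \<alpha> g t"
  shows "AE x in \<beta>. f x = g x" and "emeasure s (space \<beta>) = emeasure t (space \<beta>)"
proof -
  interpret \<beta>: finite_measure \<beta> by fact
  have f_meas: "f \<in> borel_measurable \<beta>" and f_nonneg: "\<forall>x. 0 \<le> f x"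
    and f_dec: "\<forall>A\<in>sets \<beta>. emeasure \<alpha> A = (\<integral>\<^sup>+x\<in>A. ennreal (f x) \<partial>\<beta>) + emeasure s A"
    using f unfolding leb_decomp_def by blast+
  have g_meas: "g \<in> borel_measurable \<beta>" and g_nonneg: "\<forall>x. 0 \<le> g x"
    and g_dec: "\<forall>A\<in>sets \<beta>. emeasure \<alpha> A = (\<integral>\<^sup>+x\<in>A. ennreal (g x) \<partial>\<beta>) + emeasure t A"
    using g unfolding leb_decomp_def by blast+
  note eq = leb_decomp_set_nn_integral_eq[OF f g]
  have "AE x in \<beta>. ennreal (f x) = ennreal (g x)"
    using f_meas g_meas eq by (intro \<beta>.density_unique_finite_measure) auto
  then show "AE x in \<beta>. f x = g x"
    by eventually_elim (use f_nonneg g_nonneg in auto)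
  have space: "space \<beta> \<in> sets \<beta>" by simp
  have "(\<integral>\<^sup>+x\<in>space \<beta>. ennreal (f x) \<partial>\<beta>) \<le> emeasure \<alpha> (space \<beta>)"
    using f_dec space by simp
  then have "(\<integral>\<^sup>+x\<in>space \<beta>. ennreal (f x) \<partial>\<beta>) \<noteq> \<infinity>"
    using finite_measure.emeasure_finite[OF finite_\<alpha>] by (auto simp: top_unique)
  then show "emeasure s (space \<beta>) = emeasure t (space \<beta>)"
    using f_dec[rule_format, OF space] g_dec[rule_format, OF space] eq[OF space]
    by (simp add: ennreal_add_left_cancel)
qed

lemma leb_decomp_eq_add_measure:
  assumes "leb_decomp \<beta> \<alpha> f s" "sets \<alpha> = sets \<beta>"
  shows "\<alpha> = add_measure (density \<beta> f) s"
proof (rule measure_eqI)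
  fix A assume "A \<in> sets \<alpha>"
  with assms show "emeasure \<alpha> A = emeasure (add_measure (density \<beta> f) s) A"
    by (auto simp: leb_decomp_def emeasure_add_measure emeasure_density)
qed (use assms in simp)

lemma D_phi_eq_leb_decomp:
  assumes "finite_measure \<alpha>" "finite_measure \<beta>" "leb_decomp \<beta> \<alpha> f s"
  shows "D_phi \<phi> \<alpha> \<beta> = (\<integral>\<^sup>+x. \<phi> (f x) \<partial>\<beta>) + phi_inf \<phi> * emeasure s (space \<beta>)"
  unfolding D_phi_def
proof (rule someI2)
  show "\<exists>g t. leb_decomp \<beta> \<alpha> g t \<and> (\<integral>\<^sup>+x. \<phi> (f x) \<partial>\<beta>) + phi_inf \<phi> * emeasure s (space \<beta>) =
     (\<integral>\<^sup>+x. \<phi> (g x) \<partial>\<beta>) + phi_inf \<phi> * emeasure t (space \<beta>)" using assms(3) by blast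
next
  fix v assume "\<exists>g t. leb_decomp \<beta> \<alpha> g t \<and> v = (\<integral>\<^sup>+x. \<phi> (g x) \<partial>\<beta>) + phi_inf \<phi> * emeasure t (space \<beta>)"
  then obtain g t where g: "leb_decomp \<beta> \<alpha> g t"
    and v: "v = (\<integral>\<^sup>+x. \<phi> (g x) \<partial>\<beta>) + phi_inf \<phi> * emeasure t (space \<beta>)" by blast
  have "(\<integral>\<^sup>+x. \<phi> (g x) \<partial>\<beta>) = (\<integral>\<^sup>+x. \<phi> (f x) \<partial>\<beta>)"
    using leb_decomp_unique(1)[OF assms g] by (intro nn_integral_cong_AE) auto
  then show "v = (\<integral>\<^sup>+x. \<phi> (f x) \<partial>\<beta>) + phi_inf \<phi> * emeasure s (space \<beta>)"
    using v leb_decomp_unique(2)[OF assms g] by simp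
qed

context lebesgue_decomposition
begin

lemma space_P: "space P = space M"
  using sets_P by (rule sets_eq_imp_space_eq)

lemma eq_add_measure: "P = add_measure (density M f) (density P (indicator N))"
proof (rule measure_eqI)
  fix A assume "A \<in> sets P"
  then have A: "A \<in> sets M" using sets_P by simp
  have "emeasure (density P (indicator N)) A = emeasure P (A \<inter> N)"
    using A null_set sets_P by (simp add: emeasure_restricted Int_commute)
  moreover have "emeasure (density M f) A = (\<integral>\<^sup>+x\<in>A. ennreal (f x) \<partial>M)"
    using A density_measurable by (simp add: emeasure_density)
  ultimately have "emeasure (add_measure (density M f) (density P (indicator N))) A
     = (\<integral>\<^sup>+x\<in>A. ennreal (f x) \<partial>M) + emeasure P (A \<inter> N)"
    using A sets_P by (simp add: emeasure_add_measure)
  then show "emeasure P A = emeasure (add_measure (density M f) (density P (indicator N))) A"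
    using decomposition[OF A] by simp
qed (simp add: sets_P)

lemma density_compl_eq: "density P (indicator (space M - N)) = density M f"
proof (rule measure_eqI)
  fix B assume "B \<in> sets (density P (indicator (space M - N)))"
  then have B: "B \<in> sets M" using sets_P by simp
  have "emeasure (density P (indicator (space M - N))) B = emeasure P (B - N)"
    using B null_set sets_P sets.sets_into_space[OF B]
    by (subst emeasure_restricted) (auto intro!: arg_cong[where f="emeasure P"])
  also have "\<dots> = (\<integral>\<^sup>+x\<in>B - N. ennreal (f x) \<partial>M)"
  proof -
    have "(B - N) \<inter> N = {}" by blast
    then show ?thesis using decomposition[of "B - N"] B null_set by simp
  qed
  also have "\<dots> = (\<integral>\<^sup>+x\<in>B. ennreal (f x) \<partial>M)"
    using density_null by (intro nn_integral_cong) (auto simp: indicator_def)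
  also have "\<dots> = emeasure (density M f) B" using B density_measurable by (simp add: emeasure_density)
  finally show "emeasure (density P (indicator (space M - N))) B = emeasure (density M f) B" .
qed (simp add: sets_P)

lemma density_pair_measure_compl_eq:
  "density (P \<Otimes>\<^sub>M P) (\<lambda>(x, y). indicator (space M - N) x * indicator (space M - N) y)
    = density (M \<Otimes>\<^sub>M M) (\<lambda>(x, y). ennreal (f x) * ennreal (f y))"
proof -
  interpret M: finite_measure M by (rule finite_M)
  interpret P: finite_measure P by (rule finite_P)
  have compl: "space M - N \<in> sets P" using null_set sets_P by auto
  have "finite_measure (density M f)"
    using finite_measure_density_indicator[OF finite_P compl] density_compl_eq by simp
  then have "sigma_finite_measure (density M f)" "sigma_finite_measure (density P (indicator (space M - N)))"
    using finite_measure_density_indicator[OF finite_P compl] by (auto intro: finite_measure.axioms(1))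
  then have "density P (indicator (space M - N)) \<Otimes>\<^sub>M density P (indicator (space M - N))
      = density (P \<Otimes>\<^sub>M P) (\<lambda>(x, y). indicator (space M - N) x * indicator (space M - N) y)"
    "density M f \<Otimes>\<^sub>M density M f = density (M \<Otimes>\<^sub>M M) (\<lambda>(x, y). ennreal (f x) * ennreal (f y))"
    using compl density_measurable
    by (auto intro!: pair_measure_density P.sigma_finite_measure_axioms M.sigma_finite_measure_axioms)
  then show ?thesis using density_compl_eq by simp
qed

lemma emeasure_pair_measure_diff_null:
  assumes A: "A \<in> sets (M \<Otimes>\<^sub>M M)"
  shows "emeasure (P \<Otimes>\<^sub>M P) (A - (N \<times> space M \<union> space M \<times> N))
    = (\<integral>\<^sup>+z\<in>A. ennreal (f (fst z) * f (snd z)) \<partial>(M \<Otimes>\<^sub>M M))"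
proof -
  define W where "W = N \<times> space M \<union> space M \<times> N"
  define N' where "N' = space M - N"
  have sets_PP: "sets (P \<Otimes>\<^sub>M P) = sets (M \<Otimes>\<^sub>M M)" using sets_P by (intro sets_pair_measure_cong) auto
  have A_PP: "A \<in> sets (P \<Otimes>\<^sub>M P)" using A sets_PP by simp
  have "(\<lambda>(x, y). indicator N' x * indicator N' y :: ennreal) \<in> borel_measurable (P \<Otimes>\<^sub>M P)"
    unfolding N'_def using null_set sets_P by measurable
  then have "emeasure (density (P \<Otimes>\<^sub>M P) (\<lambda>(x, y). indicator N' x * indicator N' y)) A
      = \<integral>\<^sup>+z. indicator (A - W) z \<partial>(P \<Otimes>\<^sub>M P)"
    using A_PP sets.sets_into_space[OF A_PP] by (subst emeasure_density)
      (auto intro!: nn_integral_cong simp: indicator_def W_def N'_def space_pair_measure space_P)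
  also have "\<dots> = emeasure (P \<Otimes>\<^sub>M P) (A - W)"
    using A_PP null_set sets_PP by (simp add: W_def)
  finally have "emeasure (P \<Otimes>\<^sub>M P) (A - W)
      = emeasure (density (M \<Otimes>\<^sub>M M) (\<lambda>(x, y). ennreal (f x) * ennreal (f y))) A"
    using density_pair_measure_compl_eq by (simp add: N'_def)
  also have "\<dots> = (\<integral>\<^sup>+z\<in>A. ennreal (f (fst z) * f (snd z)) \<partial>(M \<Otimes>\<^sub>M M))"
    using A density_measurable density_nonneg
    by (subst emeasure_density) (auto intro!: nn_integral_cong simp: ennreal_mult)
  finally show ?thesis by (simp add: W_def)
qed

lemma leb_decomp_pair_measure:
  "leb_decomp (M \<Otimes>\<^sub>M M) (P \<Otimes>\<^sub>M P) (\<lambda>z. f (fst z) * f (snd z))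
     (density (P \<Otimes>\<^sub>M P) (indicator (N \<times> space M \<union> space M \<times> N)))"
proof -
  interpret M: finite_measure M by (rule finite_M)
  define W where "W = N \<times> space M \<union> space M \<times> N"
  have sets_PP: "sets (P \<Otimes>\<^sub>M P) = sets (M \<Otimes>\<^sub>M M)" using sets_P by (intro sets_pair_measure_cong) auto
  have W: "W \<in> sets (M \<Otimes>\<^sub>M M)" unfolding W_def using null_set by auto
  have "emeasure (M \<Otimes>\<^sub>M M) W \<le> emeasure (M \<Otimes>\<^sub>M M) (N \<times> space M) + emeasure (M \<Otimes>\<^sub>M M) (space M \<times> N)"
    unfolding W_def using null_set by (intro emeasure_subadditive) auto
  then have null_W: "emeasure (M \<Otimes>\<^sub>M M) W = 0"
    using null_set by (simp add: M.emeasure_pair_measure_Times)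
  have singular: "emeasure (density (P \<Otimes>\<^sub>M P) (indicator W)) (space (M \<Otimes>\<^sub>M M) - W) = 0"
    using W sets_PP by (simp add: emeasure_restricted Int_Diff)
  have decomposition_PP: "emeasure (P \<Otimes>\<^sub>M P) A
      = (\<integral>\<^sup>+z\<in>A. ennreal (f (fst z) * f (snd z)) \<partial>(M \<Otimes>\<^sub>M M)) + emeasure (density (P \<Otimes>\<^sub>M P) (indicator W)) A"
    if A: "A \<in> sets (M \<Otimes>\<^sub>M M)" for A
  proof -
    have "emeasure (P \<Otimes>\<^sub>M P) A = emeasure (P \<Otimes>\<^sub>M P) (A - W) + emeasure (P \<Otimes>\<^sub>M P) (A \<inter> W)"
      using A W sets_PP by (subst plus_emeasure) (auto intro!: arg_cong[where f="emeasure (P \<Otimes>\<^sub>M P)"])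
    then show ?thesis
      using A W sets_PP emeasure_pair_measure_diff_null[OF A]
      by (simp add: W_def emeasure_restricted Int_commute)
  qed
  have "(\<lambda>z. f (fst z) * f (snd z)) \<in> borel_measurable (M \<Otimes>\<^sub>M M)"
    using density_measurable by measurable
  then show ?thesis unfolding leb_decomp_def W_def[symmetric]
    using density_nonneg sets_PP W null_W singular decomposition_PP by auto
qed

lemma D_phi_pair_measure:
  "D_phi \<phi> (P \<Otimes>\<^sub>M P) (M \<Otimes>\<^sub>M M) = (\<integral>\<^sup>+z. \<phi> (f (fst z) * f (snd z)) \<partial>(M \<Otimes>\<^sub>M M))
    + phi_inf \<phi> * emeasure (P \<Otimes>\<^sub>M P) (N \<times> space M \<union> space M \<times> N)"
proof -
  have "N \<times> space M \<union> space M \<times> N \<in> sets (P \<Otimes>\<^sub>M P)" using null_set sets_P by auto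
  moreover have "space M \<times> space M \<in> sets (P \<Otimes>\<^sub>M P)" using sets_P space_P by (metis sets.top space_pair_measure)
  moreover have "(N \<times> space M \<union> space M \<times> N) \<inter> (space M \<times> space M) = N \<times> space M \<union> space M \<times> N"
    using sets.sets_into_space[OF null_set(1)] by auto
  ultimately show ?thesis
    using D_phi_eq_leb_decomp[OF _ _ leb_decomp_pair_measure] finite_M finite_P
    by (simp add: finite_measure_pair_measure emeasure_restricted space_pair_measure space_P)
qed

lemma nn_integral_decomposition:
  assumes "u \<in> borel_measurable M"
  shows "integral\<^sup>N P u = (\<integral>\<^sup>+x. ennreal (f x) * u x \<partial>M) + (\<integral>\<^sup>+x. indicator N x * u x \<partial>P)"
proof -
  have "integral\<^sup>N P u = integral\<^sup>N (density M f) u + integral\<^sup>N (density P (indicator N)) u"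
    using assms sets_P by (subst eq_add_measure) (simp add: nn_integral_add_measure)
  then show ?thesis
    using assms density_measurable null_set sets_P measurable_cong_sets[OF sets_P refl]
    by (simp add: nn_integral_density)
qed

end

section \<open>Entropies and the cone cost\<close>

lemma borel_measurable_entropy:
  assumes "lsc_on_nonneg \<phi>"
  shows "(\<lambda>x. \<phi> (max 0 x)) \<in> borel_measurable borel"
proof (rule borel_measurableI_greater)
  fix y :: ennreal
  have "closed {x. \<phi> (max 0 x) \<le> y}"
    unfolding closed_sequential_limits
  proof (intro allI impI, elim conjE)
    fix X :: "nat \<Rightarrow> real" and l assume X: "\<forall>n. X n \<in> {x. \<phi> (max 0 x) \<le> y}" "X \<longlonglongrightarrow> l"
    have "(\<lambda>n. max 0 (X n)) \<longlonglongrightarrow> max 0 l" using X(2) by (intro tendsto_intros)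
    then have "\<phi> (max 0 l) \<le> liminf (\<lambda>n. \<phi> (max 0 (X n)))"
      using assms unfolding lsc_on_nonneg_def by auto
    also have "\<dots> \<le> limsup (\<lambda>n. \<phi> (max 0 (X n)))" by (rule Liminf_le_Limsup) simp
    also have "\<dots> \<le> y" using X(1) by (intro Limsup_bounded) auto
    finally show "l \<in> {x. \<phi> (max 0 x) \<le> y}" by simp
  qed
  then have "open {x. y < \<phi> (max 0 x)}"
    by (metis (no_types, lifting) Collect_cong Collect_neg_eq not_le open_Compl closed_def)
  then show "{x \<in> space borel. y < \<phi> (max 0 x)} \<in> sets borel" by simp
qed

lemma borel_measurable_psi:
  assumes "lsc_on_nonneg \<phi>"
  shows "psi \<phi> \<in> borel_measurable borel"
proof -
  have "psi \<phi> = (\<lambda>u. if u = 0 then phi_inf \<phi> else ennreal u * \<phi> (max 0 (1/u)))"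
    by (rule ext) (auto simp: psi_def ennreal_neg max_def)
  moreover have "\<dots> \<in> borel_measurable borel"
    using borel_measurable_entropy[OF assms] by measurable
  ultimately show ?thesis by simp
qed

lemma H_c_le_L_c: "H_c \<phi> c u v \<le> L_c \<phi> c u v"
proof -
  have "H_c \<phi> c u v
      \<le> (if (1::real) = 0 then enn2ereal (\<phi> 0 * ennreal (u + v)) else ereal 1 * L_c \<phi> c (u / 1) (v / 1))"
    unfolding H_c_def by (rule INF_lower) simp
  then show ?thesis by simp
qed

lemma H_c_le_mass: "H_c \<phi> c u v \<le> enn2ereal (\<phi> 0 * ennreal (u + v))"
proof -
  have "H_c \<phi> c u v
      \<le> (if (0::real) = 0 then enn2ereal (\<phi> 0 * ennreal (u + v)) else ereal 0 * L_c \<phi> c (u / 0) (v / 0))"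
    unfolding H_c_def by (rule INF_lower) simp
  then show ?thesis by simp
qed

lemma cone_D_pow_q_le_L_c:
  "cone_D_pow_q \<phi> lam \<Delta> p a u b v
    \<le> ereal (lam (\<Delta> a b)) + enn2ereal (psi \<phi> (u powr p) + psi \<phi> (v powr p))"
  using H_c_le_L_c[of \<phi> "lam (\<Delta> a b)" "u powr p" "v powr p"]
  by (simp add: cone_D_pow_q_def L_c_def plus_ennreal.rep_eq add.assoc)

lemma cone_D_pow_q_le_mass:
  assumes "0 \<le> r" "0 \<le> r'" "0 \<le> s" "0 \<le> s'"
  shows "cone_D_pow_q \<phi> lam \<Delta> p a (r * r') b (s * s')
    \<le> enn2ereal (\<phi> 0 * (ennreal (r powr p) * ennreal (r' powr p) + ennreal (s powr p) * ennreal (s' powr p)))"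
proof -
  have "ennreal ((r * r') powr p + (s * s') powr p)
      = ennreal (r powr p) * ennreal (r' powr p) + ennreal (s powr p) * ennreal (s' powr p)"
    using assms by (simp add: powr_mult ennreal_plus[symmetric] ennreal_mult[symmetric] del: ennreal_plus)
  then show ?thesis
    using H_c_le_mass[of \<phi> "lam (\<Delta> a b)" "(r * r') powr p" "(s * s') powr p"]
    by (simp add: cone_D_pow_q_def)
qed

section \<open>Lifting a plan to the cone\<close>

locale cone_side = lebesgue_decomposition \<mu> P f N
  for \<mu> P :: "'a::topological_space measure" and f N +
  fixes p :: real
  assumes p_pos: "0 < p" and sets_\<mu>: "sets \<mu> = sets borel"
begin

definition Pos :: "'a set" where "Pos = {x. 0 < f x}"

definition radius :: "'a \<Rightarrow> real" where "radius x = (if 0 < f x then f x powr (- 1 / p) else 0)"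

lemma space_\<mu>_UNIV [simp]: "space \<mu> = UNIV" and space_P_UNIV [simp]: "space P = UNIV"
  using sets_eq_imp_space_eq[OF sets_\<mu>] space_P by simp_all

lemma measurable_\<mu> [simp]: "measurable \<mu> X = measurable borel X"
  and measurable_P [simp]: "measurable P X = measurable borel X"
  using sets_\<mu> sets_P by (auto intro!: measurable_cong_sets)

lemma density_borel [measurable]: "f \<in> borel_measurable borel"
  using density_measurable by simp

lemma null_set_borel [measurable]: "N \<in> sets borel"
  using null_set sets_\<mu> by simp

lemma Pos_borel [measurable]: "Pos \<in> sets borel"
  unfolding Pos_def by measurable

lemma radius_borel [measurable]: "radius \<in> borel_measurable borel"
  unfolding radius_def by measurable

lemma radius_nonneg: "0 \<le> radius x"
  by (simp add: radius_def)

lemma radius_null: "x \<in> N \<Longrightarrow> radius x = 0"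
  using density_null by (simp add: radius_def)

lemma radius_powr: "radius x powr p = (if x \<in> Pos then 1 / f x else 0)"
proof (cases "0 < f x")
  case True
  have "(f x powr (- 1 / p)) powr p = f x powr (- 1 / p * p)" by (simp add: powr_powr)
  also have "- 1 / p * p = - 1" using p_pos by simp
  finally show ?thesis using True by (simp add: radius_def Pos_def powr_minus_divide)
qed (simp add: radius_def Pos_def)

lemma density_mult_radius_powr: "f x * radius x powr p = indicator Pos x"
  using density_nonneg[of x] by (auto simp: radius_powr Pos_def indicator_def)

lemma nn_integral_radius_powr: "(\<integral>\<^sup>+x. ennreal (radius x powr p) \<partial>P) = emeasure \<mu> Pos"
proof -
  have "(\<integral>\<^sup>+x. ennreal (radius x powr p) \<partial>P)
      = (\<integral>\<^sup>+x. ennreal (f x) * ennreal (radius x powr p) \<partial>\<mu>) + (\<integral>\<^sup>+x. indicator N x * ennreal (radius x powr p) \<partial>P)"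
    by (rule nn_integral_decomposition) (simp only: measurable_\<mu>, measurable)
  also have "(\<integral>\<^sup>+x. ennreal (f x) * ennreal (radius x powr p) \<partial>\<mu>) = (\<integral>\<^sup>+x. indicator Pos x \<partial>\<mu>)"
    using density_nonneg
    by (intro nn_integral_cong) (simp add: ennreal_mult''[symmetric] density_mult_radius_powr ennreal_indicator)
  also have "(\<integral>\<^sup>+x. indicator N x * ennreal (radius x powr p) \<partial>P) = (\<integral>\<^sup>+x. 0 \<partial>P)"
    by (intro nn_integral_cong) (simp add: indicator_def radius_null)
  finally show ?thesis using sets_\<mu> by simp
qed

lemma integral_radius_powr:
  fixes \<xi> :: "'a \<Rightarrow> real"
  assumes \<xi>: "\<xi> \<in> borel_measurable borel" "\<And>x. \<bar>\<xi> x\<bar> \<le> K"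
  shows "integrable P (\<lambda>x. \<xi> x * radius x powr p)"
    and "(\<integral>x. \<xi> x * radius x powr p \<partial>P) = (\<integral>x. indicator Pos x * \<xi> x \<partial>\<mu>)"
proof -
  let ?P1 = "density \<mu> f" and ?P2 = "density P (\<lambda>x. ennreal (indicator N x))"
  have sets: "sets ?P2 = sets ?P1" using sets_P by simp
  have P_eq: "P = add_measure ?P1 ?P2" using eq_add_measure by (simp add: ennreal_indicator)
  have meas: "(\<lambda>x. \<xi> x * radius x powr p) \<in> borel_measurable borel" using \<xi>(1) by measurable
  have regular: "(\<lambda>x. f x * (\<xi> x * radius x powr p)) = (\<lambda>x. indicator Pos x * \<xi> x)"
    by (rule ext) (simp add: density_mult_radius_powr[symmetric] ac_simps)
  have singular: "(\<lambda>x. indicator N x * (\<xi> x * radius x powr p)) = (\<lambda>x. 0)"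
    by (rule ext) (auto simp: indicator_def radius_null)
  have "integrable \<mu> (\<lambda>x. indicator Pos x * \<xi> x)"
    using \<xi> by (intro finite_measure.integrable_const_bound[OF finite_M, where B=K])
      (auto simp: indicator_def intro: order_trans[OF _ \<xi>(2)])
  then have int_P1: "integrable ?P1 (\<lambda>x. \<xi> x * radius x powr p)"
    using meas density_nonneg by (subst integrable_density) (auto simp: regular)
  have int_P2: "integrable ?P2 (\<lambda>x. \<xi> x * radius x powr p)"
    using meas by (subst integrable_density) (auto simp: singular)
  show "integrable P (\<lambda>x. \<xi> x * radius x powr p)"
    by (subst P_eq, subst integrable_add_measure[OF sets]) (use int_P1 int_P2 in simp)
  have "(\<integral>x. \<xi> x * radius x powr p \<partial>P)
      = (\<integral>x. \<xi> x * radius x powr p \<partial>?P1) + (\<integral>x. \<xi> x * radius x powr p \<partial>?P2)"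
    by (subst P_eq, rule integral_add_measure[OF sets int_P1 int_P2])
  also have "(\<integral>x. \<xi> x * radius x powr p \<partial>?P1) = (\<integral>x. indicator Pos x * \<xi> x \<partial>\<mu>)"
    using meas density_nonneg by (subst integral_density) (auto simp: regular)
  also have "(\<integral>x. \<xi> x * radius x powr p \<partial>?P2) = 0"
    using meas by (subst integral_density) (auto simp: singular)
  finally show "(\<integral>x. \<xi> x * radius x powr p \<partial>P) = (\<integral>x. indicator Pos x * \<xi> x \<partial>\<mu>)" by simp
qed

lemma integral_radius_powr_add_unmatched:
  fixes \<xi> :: "'a \<Rightarrow> real"
  assumes \<xi>: "\<xi> \<in> borel_measurable borel" "\<And>x. \<bar>\<xi> x\<bar> \<le> K"
  shows "integrable (density \<mu> (indicator (- Pos))) \<xi>"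
    and "(\<integral>x. \<xi> x * radius x powr p \<partial>P) + (\<integral>x. \<xi> x \<partial>density \<mu> (indicator (- Pos))) = (\<integral>x. \<xi> x \<partial>\<mu>)"
proof -
  have bounded: "integrable \<mu> (\<lambda>x. indicator A x * \<xi> x)" if "A \<in> sets borel" for A
    using \<xi> that by (intro finite_measure.integrable_const_bound[OF finite_M, where B=K])
      (auto simp: indicator_def intro: order_trans[OF _ \<xi>(2)])
  have density_eq: "density \<mu> (indicator (- Pos)) = density \<mu> (\<lambda>x. ennreal (indicator (- Pos) x))"
    by (simp add: ennreal_indicator)
  have meas: "\<xi> \<in> borel_measurable \<mu>" "(\<lambda>x. indicator (- Pos) x :: real) \<in> borel_measurable \<mu>"
    using \<xi>(1) by simp_all
  show "integrable (density \<mu> (indicator (- Pos))) \<xi>"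
    unfolding density_eq using bounded[of "- Pos"] meas by (subst integrable_density) auto
  have "(\<integral>x. \<xi> x \<partial>density \<mu> (indicator (- Pos))) = (\<integral>x. indicator (- Pos) x * \<xi> x \<partial>\<mu>)"
    unfolding density_eq using meas by (subst integral_density) auto
  then have "(\<integral>x. \<xi> x * radius x powr p \<partial>P) + (\<integral>x. \<xi> x \<partial>density \<mu> (indicator (- Pos)))
      = (\<integral>x. indicator Pos x * \<xi> x + indicator (- Pos) x * \<xi> x \<partial>\<mu>)"
    using integral_radius_powr(2)[OF \<xi>] bounded[of Pos] bounded[of "- Pos"] by simp
  also have "\<dots> = (\<integral>x. \<xi> x \<partial>\<mu>)" by (intro Bochner_Integration.integral_cong) (auto simp: indicator_def)
  finally show "(\<integral>x. \<xi> x * radius x powr p \<partial>P) + (\<integral>x. \<xi> x \<partial>density \<mu> (indicator (- Pos))) = (\<integral>x. \<xi> x \<partial>\<mu>)" .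
qed

lemma emeasure_pair_compl_Pos:
  "emeasure (\<mu> \<Otimes>\<^sub>M \<mu>) (- (Pos \<times> Pos)) = emeasure \<mu> Pos * emeasure \<mu> (- Pos) + emeasure \<mu> (- Pos) * emeasure \<mu> UNIV"
proof -
  interpret \<mu>: finite_measure \<mu> by (rule finite_M)
  have sets: "Pos \<in> sets \<mu>" "- Pos \<in> sets \<mu>" "UNIV \<in> sets \<mu>"
    using sets_\<mu> by auto
  have "- (Pos \<times> Pos) = Pos \<times> (- Pos) \<union> (- Pos) \<times> UNIV" by auto
  moreover have "emeasure (\<mu> \<Otimes>\<^sub>M \<mu>) (Pos \<times> (- Pos) \<union> (- Pos) \<times> UNIV)
      = emeasure (\<mu> \<Otimes>\<^sub>M \<mu>) (Pos \<times> (- Pos)) + emeasure (\<mu> \<Otimes>\<^sub>M \<mu>) ((- Pos) \<times> UNIV)"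
    using sets by (intro plus_emeasure[symmetric]) auto
  ultimately show ?thesis using sets by (simp add: \<mu>.emeasure_pair_measure_Times)
qed

lemma density_not_Pos: "x \<notin> Pos \<Longrightarrow> f x = 0"
  using density_nonneg[of x] by (simp add: Pos_def)

lemma density_mult_psi_radius:
  "ennreal (f x * f x') * psi \<phi> ((radius x * radius x') powr p)
    \<le> \<phi> (f x * f x') * indicator (Pos \<times> Pos) (x, x')"
proof (cases "x \<in> Pos \<and> x' \<in> Pos")
  case True
  then have pos: "0 < f x * f x'" by (simp add: Pos_def)
  have "(radius x * radius x') powr p = 1 / (f x * f x')"
    using True radius_nonneg by (simp add: powr_mult radius_powr)
  then have "ennreal (f x * f x') * psi \<phi> ((radius x * radius x') powr p)
      = (ennreal (f x * f x') * ennreal (1 / (f x * f x'))) * \<phi> (f x * f x')"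
    using pos by (simp add: psi_def mult.assoc)
  also have "ennreal (f x * f x') * ennreal (1 / (f x * f x')) = 1"
    using True by (simp add: Pos_def ennreal_mult[symmetric])
  finally show ?thesis using True by simp
qed (auto simp: density_not_Pos)

lemma psi_radius_null:
  "x \<in> N \<or> x' \<in> N \<Longrightarrow> psi \<phi> ((radius x * radius x') powr p) = phi_inf \<phi>"
  by (auto simp: radius_null psi_def)

lemma measurable_pair_measures:
  "measurable (\<mu> \<Otimes>\<^sub>M \<mu>) X = measurable (borel \<Otimes>\<^sub>M borel) X"
  "measurable (P \<Otimes>\<^sub>M P) X = measurable (borel \<Otimes>\<^sub>M borel) X"
  using sets_\<mu> sets_P by (auto intro!: measurable_cong_sets sets_pair_measure_cong)

lemma nn_integral_psi_radius_le:
  assumes lsc: "lsc_on_nonneg \<phi>"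
  shows "(\<integral>\<^sup>+z. psi \<phi> ((radius (fst z) * radius (snd z)) powr p) \<partial>(P \<Otimes>\<^sub>M P))
    \<le> (\<integral>\<^sup>+z. \<phi> (f (fst z) * f (snd z)) * indicator (Pos \<times> Pos) z \<partial>(\<mu> \<Otimes>\<^sub>M \<mu>))
      + phi_inf \<phi> * emeasure (P \<Otimes>\<^sub>M P) (N \<times> UNIV \<union> UNIV \<times> N)"
proof -
  define F where "F = (\<lambda>z. f (fst z) * f (snd z))"
  define W where "W = N \<times> UNIV \<union> UNIV \<times> (N :: 'a set)"
  define \<Psi> where "\<Psi> z = psi \<phi> ((radius (fst z) * radius (snd z)) powr p)" for z
  note [measurable] = borel_measurable_psi[OF lsc]
  have \<Psi>_meas: "\<Psi> \<in> borel_measurable (\<mu> \<Otimes>\<^sub>M \<mu>)" "\<Psi> \<in> borel_measurable (P \<Otimes>\<^sub>M P)"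
    unfolding \<Psi>_def measurable_pair_measures by measurable
  have F_meas: "(\<lambda>z. ennreal (F z)) \<in> borel_measurable (\<mu> \<Otimes>\<^sub>M \<mu>)"
    unfolding F_def measurable_pair_measures by measurable
  have "N \<times> space P \<union> space P \<times> N \<in> sets (P \<Otimes>\<^sub>M P)"
    using null_set(1) sets_P by (intro sets.Un pair_measureI sets.top) auto
  then have W: "W \<in> sets (P \<Otimes>\<^sub>M P)" by (simp add: W_def)
  have decomp: "leb_decomp (\<mu> \<Otimes>\<^sub>M \<mu>) (P \<Otimes>\<^sub>M P) F (density (P \<Otimes>\<^sub>M P) (indicator W))"
    using leb_decomp_pair_measure by (simp add: F_def W_def)
  have sets_PP: "sets (P \<Otimes>\<^sub>M P) = sets (\<mu> \<Otimes>\<^sub>M \<mu>)" using sets_P by (intro sets_pair_measure_cong) auto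
  have "(\<integral>\<^sup>+z. \<Psi> z \<partial>(P \<Otimes>\<^sub>M P))
      = (\<integral>\<^sup>+z. \<Psi> z \<partial>density (\<mu> \<Otimes>\<^sub>M \<mu>) F) + (\<integral>\<^sup>+z. \<Psi> z \<partial>density (P \<Otimes>\<^sub>M P) (indicator W))"
    using \<Psi>_meas sets_PP
    by (subst leb_decomp_eq_add_measure[OF decomp sets_PP]) (auto intro!: nn_integral_add_measure)
  also have "(\<integral>\<^sup>+z. \<Psi> z \<partial>density (\<mu> \<Otimes>\<^sub>M \<mu>) F) = (\<integral>\<^sup>+z. ennreal (F z) * \<Psi> z \<partial>(\<mu> \<Otimes>\<^sub>M \<mu>))"
    using F_meas \<Psi>_meas(1) by (rule nn_integral_density)
  also have "\<dots> \<le> (\<integral>\<^sup>+z. \<phi> (F z) * indicator (Pos \<times> Pos) z \<partial>(\<mu> \<Otimes>\<^sub>M \<mu>))"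
  proof (rule nn_integral_mono)
    fix z show "ennreal (F z) * \<Psi> z \<le> \<phi> (F z) * indicator (Pos \<times> Pos) z"
      using density_mult_psi_radius[of "fst z" "snd z"] by (simp add: F_def \<Psi>_def)
  qed
  also have "(\<integral>\<^sup>+z. \<Psi> z \<partial>density (P \<Otimes>\<^sub>M P) (indicator W)) = (\<integral>\<^sup>+z. indicator W z * \<Psi> z \<partial>(P \<Otimes>\<^sub>M P))"
    using W \<Psi>_meas(2) by (intro nn_integral_density) auto
  also have "\<dots> = (\<integral>\<^sup>+z. phi_inf \<phi> * indicator W z \<partial>(P \<Otimes>\<^sub>M P))"
  proof (rule nn_integral_cong)
    fix z show "indicator W z * \<Psi> z = phi_inf \<phi> * indicator W z"
      using psi_radius_null[of "fst z" "snd z"] by (cases z) (auto simp: W_def \<Psi>_def indicator_def)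
  qed
  also have "\<dots> = phi_inf \<phi> * emeasure (P \<Otimes>\<^sub>M P) W"
    using W by (rule nn_integral_cmult_indicator)
  finally show ?thesis by (simp add: F_def W_def \<Psi>_def add_right_mono)
qed

lemma nn_integral_entropy_split:
  assumes lsc: "lsc_on_nonneg \<phi>"
  shows "(\<integral>\<^sup>+z. \<phi> (f (fst z) * f (snd z)) \<partial>(\<mu> \<Otimes>\<^sub>M \<mu>))
    = (\<integral>\<^sup>+z. \<phi> (f (fst z) * f (snd z)) * indicator (Pos \<times> Pos) z \<partial>(\<mu> \<Otimes>\<^sub>M \<mu>))
      + \<phi> 0 * emeasure (\<mu> \<Otimes>\<^sub>M \<mu>) (- (Pos \<times> Pos))"
proof -
  define F where "F = (\<lambda>z. f (fst z) * f (snd z))"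
  have "(\<lambda>z. \<phi> (max 0 (F z))) \<in> borel_measurable (\<mu> \<Otimes>\<^sub>M \<mu>)"
    using borel_measurable_entropy[OF lsc] unfolding F_def measurable_pair_measures by measurable
  then have \<phi>F_meas: "(\<lambda>z. \<phi> (F z)) \<in> borel_measurable (\<mu> \<Otimes>\<^sub>M \<mu>)"
    using density_nonneg by (simp add: F_def max_def)
  have "Pos \<times> Pos \<in> sets (\<mu> \<Otimes>\<^sub>M \<mu>)" using sets_\<mu> by simp
  then have Pos: "Pos \<times> Pos \<in> sets (\<mu> \<Otimes>\<^sub>M \<mu>)" "- (Pos \<times> Pos) \<in> sets (\<mu> \<Otimes>\<^sub>M \<mu>)"
    using sets.compl_sets[of "Pos \<times> Pos" "\<mu> \<Otimes>\<^sub>M \<mu>"] by (simp_all add: space_pair_measure Compl_eq_Diff_UNIV)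
  have "(\<integral>\<^sup>+z. \<phi> (F z) \<partial>(\<mu> \<Otimes>\<^sub>M \<mu>))
      = (\<integral>\<^sup>+z. \<phi> (F z) * indicator (Pos \<times> Pos) z + \<phi> 0 * indicator (- (Pos \<times> Pos)) z \<partial>(\<mu> \<Otimes>\<^sub>M \<mu>))"
  proof (rule nn_integral_cong)
    fix z :: "'a \<times> 'a"
    consider "z \<in> Pos \<times> Pos" | "fst z \<notin> Pos" | "snd z \<notin> Pos" by (cases z) auto
    then show "\<phi> (F z) = \<phi> (F z) * indicator (Pos \<times> Pos) z + \<phi> 0 * indicator (- (Pos \<times> Pos)) z"
      by cases (auto simp: indicator_def F_def density_not_Pos)
  qed
  also have "\<dots> = (\<integral>\<^sup>+z. \<phi> (F z) * indicator (Pos \<times> Pos) z \<partial>(\<mu> \<Otimes>\<^sub>M \<mu>))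
      + \<phi> 0 * emeasure (\<mu> \<Otimes>\<^sub>M \<mu>) (- (Pos \<times> Pos))"
    using \<phi>F_meas Pos by (simp add: nn_integral_add nn_integral_cmult_indicator)
  finally show ?thesis by (simp add: F_def)
qed

text \<open>The divergence of the lifted marginal pays for the entropic part of the lifted plan, and its
  \<open>\<phi>(0)\<close>-part on the complement of \<open>Pos \<times> Pos\<close> pays for the mass left unmatched.\<close>

lemma D_phi_pair_ge:
  assumes "lsc_on_nonneg \<phi>"
  shows "(\<integral>\<^sup>+z. psi \<phi> ((radius (fst z) * radius (snd z)) powr p) \<partial>(P \<Otimes>\<^sub>M P))
      + \<phi> 0 * emeasure (\<mu> \<Otimes>\<^sub>M \<mu>) (- (Pos \<times> Pos)) \<le> D_phi \<phi> (P \<Otimes>\<^sub>M P) (\<mu> \<Otimes>\<^sub>M \<mu>)"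
  using add_right_mono[OF nn_integral_psi_radius_le[OF assms], of "\<phi> 0 * emeasure (\<mu> \<Otimes>\<^sub>M \<mu>) (- (Pos \<times> Pos))"]
  by (simp add: D_phi_pair_measure nn_integral_entropy_split[OF assms] ac_simps)

end

lemma measurable_borel_prod_iff:
  "measurable (borel :: ('x::second_countable_topology \<times> 'y::second_countable_topology) measure) N
    = measurable (borel \<Otimes>\<^sub>M borel) N"
  by (simp only: borel_prod)

lemma sets_borel_cone:
  "sets (borel :: (('x::second_countable_topology \<times> real) \<times> ('y::second_countable_topology \<times> real)) measure)
    = sets ((borel \<Otimes>\<^sub>M borel) \<Otimes>\<^sub>M (borel \<Otimes>\<^sub>M borel))"
  by (simp only: borel_prod)

lemma measurable_borel_cone_iff:
  "measurable (borel :: (('x::second_countable_topology \<times> real) \<times> ('y::second_countable_topology \<times> real)) measure) N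
    = measurable ((borel \<Otimes>\<^sub>M borel) \<Otimes>\<^sub>M (borel \<Otimes>\<^sub>M borel)) N"
  "measurable M (borel :: (('x::second_countable_topology \<times> real) \<times> ('y::second_countable_topology \<times> real)) measure)
    = measurable M ((borel \<Otimes>\<^sub>M borel) \<Otimes>\<^sub>M (borel \<Otimes>\<^sub>M borel))"
  by (simp_all only: measurable_cong_sets[OF sets_borel_cone refl] measurable_cong_sets[OF refl sets_borel_cone])

text \<open>The part of \<open>\<mu>\<close> where the first marginal of \<open>\<pi>\<close> has zero density is placed at radius \<open>1\<close>,
  paired with the apex \<open>[y, 0]\<close> of the other cone; the choice of \<open>y\<close> is irrelevant, hence
  \<open>undefined\<close>.\<close>

locale cone_lift =
  X: cone_side \<mu> "distr \<pi> borel fst" f N p + Y: cone_side \<nu> "distr \<pi> borel snd" g N' p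
  for \<mu> :: "'a::polish_space measure" and \<nu> :: "'b::polish_space measure" and \<pi> :: "('a \<times> 'b) measure"
    and f N g N' p +
  assumes sets_\<pi>: "sets \<pi> = sets borel" and finite_\<pi>: "finite_measure \<pi>"
begin

definition lift :: "'a \<times> 'b \<Rightarrow> ('a \<times> real) \<times> ('b \<times> real)" where
  "lift = (\<lambda>(x, y). ((x, X.radius x), (y, Y.radius y)))"

definition lifted_plan :: "(('a \<times> real) \<times> ('b \<times> real)) measure" where
  "lifted_plan = distr \<pi> borel lift"

definition embed_fst :: "'a \<Rightarrow> ('a \<times> real) \<times> ('b \<times> real)" where
  "embed_fst x = ((x, 1), (undefined, 0))"

definition embed_snd :: "'b \<Rightarrow> ('a \<times> real) \<times> ('b \<times> real)" where
  "embed_snd y = ((undefined, 0), (y, 1))"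

definition unmatched :: "(('a \<times> real) \<times> ('b \<times> real)) measure" where
  "unmatched = add_measure (distr (density \<mu> (indicator (- X.Pos))) borel embed_fst)
     (distr (density \<nu> (indicator (- Y.Pos))) borel embed_snd)"

definition cone_plan :: "(('a \<times> real) \<times> ('b \<times> real)) measure" where
  "cone_plan = add_measure lifted_plan unmatched"

lemma measurable_\<pi> [simp]: "measurable \<pi> X = measurable borel X"
  using sets_\<pi> by (auto intro!: measurable_cong_sets)

lemma measurable_lift: "lift \<in> borel \<rightarrow>\<^sub>M borel"
  unfolding measurable_borel_cone_iff(2) measurable_borel_prod_iff lift_def by measurable

lemma measurable_embed: "embed_fst \<in> borel \<rightarrow>\<^sub>M borel" "embed_snd \<in> borel \<rightarrow>\<^sub>M borel"
  unfolding measurable_borel_cone_iff(2) embed_fst_def embed_snd_def by (measurable, measurable)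

lemma sets_cone_measures [simp]:
  "sets lifted_plan = sets borel" "sets unmatched = sets borel" "sets cone_plan = sets borel"
  by (simp_all add: lifted_plan_def unmatched_def cone_plan_def)

lemma finite_measure_cone_measures:
  "finite_measure lifted_plan" "finite_measure unmatched" "finite_measure cone_plan"
proof -
  have "finite_measure (distr (density \<mu> (indicator (- X.Pos))) borel embed_fst)"
    "finite_measure (distr (density \<nu> (indicator (- Y.Pos))) borel embed_snd)"
    using measurable_embed X.finite_M Y.finite_M X.sets_\<mu> Y.sets_\<mu>
    by (auto intro!: finite_measure.finite_measure_distr finite_measure_density_indicator)
  then show "finite_measure lifted_plan" "finite_measure unmatched" "finite_measure cone_plan"
    using finite_\<pi> measurable_lift unfolding lifted_plan_def unmatched_def cone_plan_def
    by (auto intro!: finite_measure_add_measure finite_measure.finite_measure_distr)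
qed

lemma integral_cone_plan:
  fixes v :: "('a \<times> real) \<times> ('b \<times> real) \<Rightarrow> real"
  assumes v: "v \<in> borel_measurable borel"
    and int: "integrable \<pi> (\<lambda>z. v (lift z))"
      "integrable (density \<mu> (indicator (- X.Pos))) (\<lambda>x. v (embed_fst x))"
      "integrable (density \<nu> (indicator (- Y.Pos))) (\<lambda>y. v (embed_snd y))"
  shows "integrable cone_plan v"
    and "integral\<^sup>L cone_plan v = (\<integral>z. v (lift z) \<partial>\<pi>)
      + (\<integral>x. v (embed_fst x) \<partial>density \<mu> (indicator (- X.Pos)))
      + (\<integral>y. v (embed_snd y) \<partial>density \<nu> (indicator (- Y.Pos)))"
proof -
  have meas: "lift \<in> \<pi> \<rightarrow>\<^sub>M borel" "embed_fst \<in> density \<mu> (indicator (- X.Pos)) \<rightarrow>\<^sub>M borel"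
    "embed_snd \<in> density \<nu> (indicator (- Y.Pos)) \<rightarrow>\<^sub>M borel"
    using measurable_lift measurable_embed by simp_all
  note distr = integrable_distr_eq[OF meas(1) v] integrable_distr_eq[OF meas(2) v]
    integrable_distr_eq[OF meas(3) v] integral_distr[OF meas(1) v] integral_distr[OF meas(2) v]
    integral_distr[OF meas(3) v]
  have int_unmatched: "integrable unmatched v"
    unfolding unmatched_def using int by (simp add: integrable_add_measure distr)
  then show "integrable cone_plan v"
    unfolding cone_plan_def lifted_plan_def using int by (simp add: integrable_add_measure distr)
  show "integral\<^sup>L cone_plan v = (\<integral>z. v (lift z) \<partial>\<pi>)
      + (\<integral>x. v (embed_fst x) \<partial>density \<mu> (indicator (- X.Pos)))
      + (\<integral>y. v (embed_snd y) \<partial>density \<nu> (indicator (- Y.Pos)))"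
    using int int_unmatched[unfolded unmatched_def]
    unfolding cone_plan_def lifted_plan_def unmatched_def
    by (simp add: integral_add_measure distr add.assoc)
qed

lemma cone_plan_marginal_fst:
  fixes \<xi> :: "'a \<Rightarrow> real"
  assumes "continuous_on UNIV \<xi>" "bounded (range \<xi>)"
  shows "integrable cone_plan (\<lambda>((x, r), (y, s)). \<xi> x * r powr p)"
    and "(\<integral>((x, r), (y, s)). \<xi> x * r powr p \<partial>cone_plan) = (\<integral>x. \<xi> x \<partial>\<mu>)"
proof -
  have \<xi>: "\<xi> \<in> borel_measurable borel" using assms(1) by (intro borel_measurable_continuous_onI) auto
  obtain K where K: "\<And>x. \<bar>\<xi> x\<bar> \<le> K" using assms(2) unfolding bounded_iff by auto
  define v :: "('a \<times> real) \<times> ('b \<times> real) \<Rightarrow> real"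
    where "v w = \<xi> (fst (fst w)) * snd (fst w) powr p" for w
  have v: "v \<in> borel_measurable borel"
    unfolding measurable_borel_cone_iff(1) v_def using \<xi> by measurable
  have fst_meas: "fst \<in> \<pi> \<rightarrow>\<^sub>M borel" by (simp only: measurable_\<pi> borel_prod[symmetric]) simp
  have "(\<lambda>z. v (lift z)) = (\<lambda>z. \<xi> (fst z) * X.radius (fst z) powr p)"
    by (auto simp: v_def lift_def)
  moreover have "(\<lambda>x. v (embed_fst x)) = \<xi>" "(\<lambda>y. v (embed_snd y)) = (\<lambda>_. 0)"
    by (auto simp: v_def embed_fst_def embed_snd_def)
  moreover have g: "(\<lambda>x. \<xi> x * X.radius x powr p) \<in> borel_measurable borel" using \<xi> by measurable
  ultimately have "integrable cone_plan v \<and> integral\<^sup>L cone_plan v = (\<integral>x. \<xi> x \<partial>\<mu>)"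
    using X.integral_radius_powr(1)[OF \<xi> K] X.integral_radius_powr_add_unmatched[OF \<xi> K]
      integral_cone_plan[OF v]
    by (simp add: integrable_distr_eq[OF fst_meas g] integral_distr[OF fst_meas g])
  moreover have "(\<lambda>((x, r), (y, s)). \<xi> x * r powr p) = v" by (auto simp: v_def)
  ultimately show "integrable cone_plan (\<lambda>((x, r), (y, s)). \<xi> x * r powr p)"
    "(\<integral>((x, r), (y, s)). \<xi> x * r powr p \<partial>cone_plan) = (\<integral>x. \<xi> x \<partial>\<mu>)"
    by simp_all
qed

lemma cone_plan_marginal_snd:
  fixes \<zeta> :: "'b \<Rightarrow> real"
  assumes "continuous_on UNIV \<zeta>" "bounded (range \<zeta>)"
  shows "integrable cone_plan (\<lambda>((x, r), (y, s)). \<zeta> y * s powr p)"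
    and "(\<integral>((x, r), (y, s)). \<zeta> y * s powr p \<partial>cone_plan) = (\<integral>y. \<zeta> y \<partial>\<nu>)"
proof -
  have \<zeta>: "\<zeta> \<in> borel_measurable borel" using assms(1) by (intro borel_measurable_continuous_onI) auto
  obtain K where K: "\<And>x. \<bar>\<zeta> x\<bar> \<le> K" using assms(2) unfolding bounded_iff by auto
  define v :: "('a \<times> real) \<times> ('b \<times> real) \<Rightarrow> real"
    where "v w = \<zeta> (fst (snd w)) * snd (snd w) powr p" for w
  have v: "v \<in> borel_measurable borel"
    unfolding measurable_borel_cone_iff(1) v_def using \<zeta> by measurable
  have snd_meas: "snd \<in> \<pi> \<rightarrow>\<^sub>M borel" by (simp only: measurable_\<pi> borel_prod[symmetric]) simp
  have "(\<lambda>z. v (lift z)) = (\<lambda>z. \<zeta> (snd z) * Y.radius (snd z) powr p)"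
    by (auto simp: v_def lift_def)
  moreover have "(\<lambda>x. v (embed_fst x)) = (\<lambda>_. 0)" "(\<lambda>y. v (embed_snd y)) = \<zeta>"
    by (auto simp: v_def embed_fst_def embed_snd_def)
  moreover have g: "(\<lambda>x. \<zeta> x * Y.radius x powr p) \<in> borel_measurable borel" using \<zeta> by measurable
  ultimately have "integrable cone_plan v \<and> integral\<^sup>L cone_plan v = (\<integral>y. \<zeta> y \<partial>\<nu>)"
    using Y.integral_radius_powr(1)[OF \<zeta> K] Y.integral_radius_powr_add_unmatched[OF \<zeta> K]
      integral_cone_plan[OF v]
    by (simp add: integrable_distr_eq[OF snd_meas g] integral_distr[OF snd_meas g])
  moreover have "(\<lambda>((x, r), (y, s)). \<zeta> y * s powr p) = v" by (auto simp: v_def)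
  ultimately show "integrable cone_plan (\<lambda>((x, r), (y, s)). \<zeta> y * s powr p)"
    "(\<integral>((x, r), (y, s)). \<zeta> y * s powr p \<partial>cone_plan) = (\<integral>y. \<zeta> y \<partial>\<nu>)"
    by simp_all
qed

lemma sets_radii_nonneg:
  "{w \<in> space borel. 0 \<le> snd (fst w) \<and> 0 \<le> snd (snd w)}
    \<in> sets (borel :: (('a \<times> real) \<times> ('b \<times> real)) measure)"
proof -
  have "{w \<in> space ((borel \<Otimes>\<^sub>M borel) \<Otimes>\<^sub>M (borel \<Otimes>\<^sub>M borel)).
      0 \<le> snd (fst (w :: ('a \<times> real) \<times> ('b \<times> real))) \<and> 0 \<le> snd (snd w)}
    \<in> sets ((borel \<Otimes>\<^sub>M borel) \<Otimes>\<^sub>M (borel \<Otimes>\<^sub>M borel))"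
    by measurable
  then show ?thesis by (simp add: sets_borel_cone space_pair_measure)
qed

lemma AE_radii_nonneg:
  "AE w in lifted_plan. 0 \<le> snd (fst w) \<and> 0 \<le> snd (snd w)"
  "AE w in unmatched. 0 \<le> snd (fst w) \<and> 0 \<le> snd (snd w)"
  "AE w in cone_plan. 0 \<le> snd (fst w) \<and> 0 \<le> snd (snd w)"
proof -
  have meas: "lift \<in> \<pi> \<rightarrow>\<^sub>M borel" "embed_fst \<in> density \<mu> (indicator (- X.Pos)) \<rightarrow>\<^sub>M borel"
    "embed_snd \<in> density \<nu> (indicator (- Y.Pos)) \<rightarrow>\<^sub>M borel"
    using measurable_lift measurable_embed by simp_all
  show lifted: "AE w in lifted_plan. 0 \<le> snd (fst w) \<and> 0 \<le> snd (snd w)"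
    unfolding lifted_plan_def using sets_radii_nonneg
    by (subst AE_distr_iff[OF meas(1)]) (auto simp: lift_def X.radius_nonneg Y.radius_nonneg split: prod.splits)
  have "AE w in distr (density \<mu> (indicator (- X.Pos))) borel embed_fst. 0 \<le> snd (fst w) \<and> 0 \<le> snd (snd w)"
    "AE w in distr (density \<nu> (indicator (- Y.Pos))) borel embed_snd. 0 \<le> snd (fst w) \<and> 0 \<le> snd (snd w)"
    using sets_radii_nonneg
    by (subst AE_distr_iff[OF meas(2)] AE_distr_iff[OF meas(3)]; simp add: embed_fst_def embed_snd_def)+
  then show unmatched: "AE w in unmatched. 0 \<le> snd (fst w) \<and> 0 \<le> snd (snd w)"
    unfolding unmatched_def by (intro AE_add_measure) auto
  show "AE w in cone_plan. 0 \<le> snd (fst w) \<and> 0 \<le> snd (snd w)"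
    unfolding cone_plan_def using lifted unmatched by (intro AE_add_measure) auto
qed

lemma cone_plan_in_U_p: "cone_plan \<in> U_p p \<mu> \<nu>"
proof -
  have neg: "{w \<in> space cone_plan. \<not> (0 \<le> snd (fst w) \<and> 0 \<le> snd (snd w))} \<in> sets cone_plan"
    using sets.compl_sets[OF sets_radii_nonneg] sets_eq_imp_space_eq[OF sets_cone_measures(3)]
    by (simp add: set_diff_eq)
  have "emeasure cone_plan {w \<in> space cone_plan. \<not> (0 \<le> snd (fst w) \<and> 0 \<le> snd (snd w))} = 0"
    by (rule AE_iff_measurable[OF neg refl, THEN iffD1, OF AE_radii_nonneg(3)])
  moreover have "{((x, r), (y, s)). r < 0 \<or> s < 0} = {w \<in> space cone_plan. \<not> (0 \<le> snd (fst w) \<and> 0 \<le> snd (snd w))}"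
    using sets_eq_imp_space_eq[OF sets_cone_measures(3)] by auto
  ultimately show ?thesis
    unfolding U_p_def using finite_measure_cone_measures(3) cone_plan_marginal_fst cone_plan_marginal_snd
    by auto
qed

lemma pair_cone_plan_eq:
  "cone_plan \<Otimes>\<^sub>M cone_plan = add_measure (distr (\<pi> \<Otimes>\<^sub>M \<pi>) (borel \<Otimes>\<^sub>M borel) (\<lambda>(z, z'). (lift z, lift z')))
     (add_measure (lifted_plan \<Otimes>\<^sub>M unmatched) (unmatched \<Otimes>\<^sub>M cone_plan))"
proof -
  note finite = finite_measure_cone_measures
  have sets_pairs: "sets (X \<Otimes>\<^sub>M Y) = sets (borel \<Otimes>\<^sub>M borel)"
    if "sets X = sets borel" "sets Y = sets borel" for X Y :: "(('a \<times> real) \<times> ('b \<times> real)) measure"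
    using that by (intro sets_pair_measure_cong)
  have lift_meas: "lift \<in> \<pi> \<rightarrow>\<^sub>M borel" using measurable_lift by simp
  have "cone_plan \<Otimes>\<^sub>M cone_plan = add_measure lifted_plan unmatched \<Otimes>\<^sub>M cone_plan"
    by (simp add: cone_plan_def)
  also have "\<dots> = add_measure (lifted_plan \<Otimes>\<^sub>M cone_plan) (unmatched \<Otimes>\<^sub>M cone_plan)"
    using finite(3) by (intro pair_measure_add_measure_left) (auto intro: finite_measure.axioms(1))
  also have "lifted_plan \<Otimes>\<^sub>M cone_plan = add_measure (lifted_plan \<Otimes>\<^sub>M lifted_plan) (lifted_plan \<Otimes>\<^sub>M unmatched)"
    unfolding cone_plan_def using finite by (intro pair_measure_add_measure_right) auto
  also have "lifted_plan \<Otimes>\<^sub>M lifted_plan = distr (\<pi> \<Otimes>\<^sub>M \<pi>) (borel \<Otimes>\<^sub>M borel) (\<lambda>(z, z'). (lift z, lift z'))"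
    unfolding lifted_plan_def using finite(1)
    by (intro pair_measure_distr lift_meas) (auto simp: lifted_plan_def intro: finite_measure.axioms(1))
  finally show ?thesis
    using sets_pairs by (subst (asm) add_measure_assoc) auto
qed

definition mass_fst :: "('a \<times> real) \<times> ('b \<times> real) \<Rightarrow> ennreal" where
  "mass_fst w = ennreal (snd (fst w) powr p)"

definition mass_snd :: "('a \<times> real) \<times> ('b \<times> real) \<Rightarrow> ennreal" where
  "mass_snd w = ennreal (snd (snd w) powr p)"

lemma measurable_masses: "mass_fst \<in> borel_measurable borel" "mass_snd \<in> borel_measurable borel"
  unfolding measurable_borel_cone_iff(1) mass_fst_def mass_snd_def by (measurable, measurable)

lemma nn_integral_masses:
  "integral\<^sup>N lifted_plan mass_fst = emeasure \<mu> X.Pos" "integral\<^sup>N lifted_plan mass_snd = emeasure \<nu> Y.Pos"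
  "integral\<^sup>N unmatched mass_fst = emeasure \<mu> (- X.Pos)" "integral\<^sup>N unmatched mass_snd = emeasure \<nu> (- Y.Pos)"
proof -
  have meas: "lift \<in> \<pi> \<rightarrow>\<^sub>M borel" "embed_fst \<in> density \<mu> (indicator (- X.Pos)) \<rightarrow>\<^sub>M borel"
    "embed_snd \<in> density \<nu> (indicator (- Y.Pos)) \<rightarrow>\<^sub>M borel" "fst \<in> \<pi> \<rightarrow>\<^sub>M borel" "snd \<in> \<pi> \<rightarrow>\<^sub>M borel"
    using measurable_lift measurable_embed by (simp_all only: measurable_\<pi> borel_prod[symmetric]) simp_all
  have radius_meas: "(\<lambda>x. ennreal (X.radius x powr p)) \<in> borel_measurable borel"
    "(\<lambda>y. ennreal (Y.radius y powr p)) \<in> borel_measurable borel"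
    by measurable
  have "integral\<^sup>N lifted_plan mass_fst = (\<integral>\<^sup>+x. ennreal (X.radius x powr p) \<partial>distr \<pi> borel fst)"
  proof -
    have "integral\<^sup>N lifted_plan mass_fst = (\<integral>\<^sup>+z. mass_fst (lift z) \<partial>\<pi>)"
      unfolding lifted_plan_def using meas(1) measurable_masses(1) by (simp add: nn_integral_distr)
    also have "\<dots> = (\<integral>\<^sup>+x. ennreal (X.radius x powr p) \<partial>distr \<pi> borel fst)"
      using meas(4) radius_meas(1) by (simp add: nn_integral_distr mass_fst_def lift_def case_prod_beta)
    finally show ?thesis .
  qed
  then show "integral\<^sup>N lifted_plan mass_fst = emeasure \<mu> X.Pos" by (simp add: X.nn_integral_radius_powr)
  have "integral\<^sup>N lifted_plan mass_snd = (\<integral>\<^sup>+y. ennreal (Y.radius y powr p) \<partial>distr \<pi> borel snd)"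
  proof -
    have "integral\<^sup>N lifted_plan mass_snd = (\<integral>\<^sup>+z. mass_snd (lift z) \<partial>\<pi>)"
      unfolding lifted_plan_def using meas(1) measurable_masses(2) by (simp add: nn_integral_distr)
    also have "\<dots> = (\<integral>\<^sup>+y. ennreal (Y.radius y powr p) \<partial>distr \<pi> borel snd)"
      using meas(5) radius_meas(2) by (simp add: nn_integral_distr mass_snd_def lift_def case_prod_beta)
    finally show ?thesis .
  qed
  then show "integral\<^sup>N lifted_plan mass_snd = emeasure \<nu> Y.Pos" by (simp add: Y.nn_integral_radius_powr)
  have compl: "- X.Pos \<in> sets \<mu>" "- Y.Pos \<in> sets \<nu>" "UNIV \<in> sets \<mu>" "UNIV \<in> sets \<nu>"
    using X.sets_\<mu> Y.sets_\<mu> by auto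
  have "integral\<^sup>N unmatched k
      = (\<integral>\<^sup>+x. k (embed_fst x) \<partial>density \<mu> (indicator (- X.Pos)))
        + (\<integral>\<^sup>+y. k (embed_snd y) \<partial>density \<nu> (indicator (- Y.Pos)))"
    if "k \<in> borel_measurable borel" for k
    unfolding unmatched_def using that meas by (simp add: nn_integral_add_measure nn_integral_distr)
  then show "integral\<^sup>N unmatched mass_fst = emeasure \<mu> (- X.Pos)"
    "integral\<^sup>N unmatched mass_snd = emeasure \<nu> (- Y.Pos)"
    using measurable_masses compl
    by (simp_all add: mass_fst_def mass_snd_def embed_fst_def embed_snd_def emeasure_restricted)
qed

lemma nn_integral_mass_cost:
  "(\<integral>\<^sup>+w. c * (mass_fst (fst w) * mass_fst (snd w) + mass_snd (fst w) * mass_snd (snd w))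
      \<partial>add_measure (lifted_plan \<Otimes>\<^sub>M unmatched) (unmatched \<Otimes>\<^sub>M cone_plan))
    = c * emeasure (\<mu> \<Otimes>\<^sub>M \<mu>) (- (X.Pos \<times> X.Pos)) + c * emeasure (\<nu> \<Otimes>\<^sub>M \<nu>) (- (Y.Pos \<times> Y.Pos))"
proof -
  note finite = finite_measure_cone_measures
  have meas: "mass_fst \<in> borel_measurable X" "mass_snd \<in> borel_measurable X" if "sets X = sets borel" for X
    using measurable_masses measurable_cong_sets[OF that refl] by auto
  have pair: "(\<integral>\<^sup>+w. c * (mass_fst (fst w) * mass_fst (snd w) + mass_snd (fst w) * mass_snd (snd w)) \<partial>(X \<Otimes>\<^sub>M Y))
      = c * (integral\<^sup>N X mass_fst * integral\<^sup>N Y mass_fst + integral\<^sup>N X mass_snd * integral\<^sup>N Y mass_snd)"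
    if XY: "sets X = sets borel" "sets Y = sets borel" "finite_measure Y" for X Y
  proof -
    have "sigma_finite_measure Y" using XY(3) by (rule finite_measure.axioms(1))
    note prod = nn_integral_pair_measure_mult[OF this meas(1)[OF XY(1)] meas(1)[OF XY(2)]]
      nn_integral_pair_measure_mult[OF this meas(2)[OF XY(1)] meas(2)[OF XY(2)]]
    have "(\<lambda>w. mass_fst (fst w) * mass_fst (snd w)) \<in> borel_measurable (X \<Otimes>\<^sub>M Y)"
      "(\<lambda>w. mass_snd (fst w) * mass_snd (snd w)) \<in> borel_measurable (X \<Otimes>\<^sub>M Y)"
      using meas[OF XY(1)] meas[OF XY(2)] by measurable
    then show ?thesis by (simp add: nn_integral_cmult nn_integral_add prod)
  qed
  have cone: "integral\<^sup>N cone_plan mass_fst = emeasure \<mu> X.Pos + emeasure \<mu> (- X.Pos)"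
    "integral\<^sup>N cone_plan mass_snd = emeasure \<nu> Y.Pos + emeasure \<nu> (- Y.Pos)"
    using meas[of lifted_plan]
    by (simp_all add: cone_plan_def nn_integral_add_measure nn_integral_masses)
  have UNIV: "emeasure \<mu> UNIV = emeasure \<mu> X.Pos + emeasure \<mu> (- X.Pos)"
    "emeasure \<nu> UNIV = emeasure \<nu> Y.Pos + emeasure \<nu> (- Y.Pos)"
    using plus_emeasure[of X.Pos \<mu> "- X.Pos"] plus_emeasure[of Y.Pos \<nu> "- Y.Pos"] X.sets_\<mu> Y.sets_\<mu>
    by (simp_all add: Compl_partition)
  have sets_R: "sets (unmatched \<Otimes>\<^sub>M cone_plan) = sets (lifted_plan \<Otimes>\<^sub>M unmatched)"
    by (intro sets_pair_measure_cong) auto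
  have "(\<lambda>w. c * (mass_fst (fst w) * mass_fst (snd w) + mass_snd (fst w) * mass_snd (snd w)))
      \<in> borel_measurable (lifted_plan \<Otimes>\<^sub>M unmatched)"
    using meas[of lifted_plan] meas[of unmatched] by measurable
  then have "(\<integral>\<^sup>+w. c * (mass_fst (fst w) * mass_fst (snd w) + mass_snd (fst w) * mass_snd (snd w))
      \<partial>add_measure (lifted_plan \<Otimes>\<^sub>M unmatched) (unmatched \<Otimes>\<^sub>M cone_plan))
    = c * (emeasure \<mu> X.Pos * emeasure \<mu> (- X.Pos) + emeasure \<nu> Y.Pos * emeasure \<nu> (- Y.Pos))
      + c * (emeasure \<mu> (- X.Pos) * emeasure \<mu> UNIV + emeasure \<nu> (- Y.Pos) * emeasure \<nu> UNIV)"
    using finite by (simp add: nn_integral_add_measure[OF sets_R] pair cone nn_integral_masses UNIV)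
  then show ?thesis
    by (simp add: X.emeasure_pair_compl_Pos Y.emeasure_pair_compl_Pos distrib_left ac_simps)
qed

lemma nn_integral_entropy_lift:
  assumes lsc: "lsc_on_nonneg \<phi>"
  shows "(\<integral>\<^sup>+z. psi \<phi> ((X.radius (fst (fst z)) * X.radius (fst (snd z))) powr p)
        + psi \<phi> ((Y.radius (snd (fst z)) * Y.radius (snd (snd z))) powr p) \<partial>(\<pi> \<Otimes>\<^sub>M \<pi>))
    = (\<integral>\<^sup>+z. psi \<phi> ((X.radius (fst z) * X.radius (snd z)) powr p) \<partial>(distr \<pi> borel fst \<Otimes>\<^sub>M distr \<pi> borel fst))
      + (\<integral>\<^sup>+z. psi \<phi> ((Y.radius (fst z) * Y.radius (snd z)) powr p) \<partial>(distr \<pi> borel snd \<Otimes>\<^sub>M distr \<pi> borel snd))"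
proof -
  note [measurable] = borel_measurable_psi[OF lsc]
  have meas: "fst \<in> \<pi> \<rightarrow>\<^sub>M borel" "snd \<in> \<pi> \<rightarrow>\<^sub>M borel"
    by (simp_all only: measurable_\<pi> borel_prod[symmetric]) simp_all
  have sets_\<pi>\<pi>: "sets (\<pi> \<Otimes>\<^sub>M \<pi>) = sets ((borel \<Otimes>\<^sub>M borel) \<Otimes>\<^sub>M (borel \<Otimes>\<^sub>M borel))"
    using sets_\<pi> by (intro sets_pair_measure_cong) (simp_all only: borel_prod)
  have "sigma_finite_measure (distr \<pi> borel fst)" "sigma_finite_measure (distr \<pi> borel snd)"
    using X.finite_P Y.finite_P by (auto intro: finite_measure.axioms(1))
  then have pairs:
    "distr \<pi> borel fst \<Otimes>\<^sub>M distr \<pi> borel fst = distr (\<pi> \<Otimes>\<^sub>M \<pi>) (borel \<Otimes>\<^sub>M borel) (\<lambda>(z, z'). (fst z, fst z'))"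
    "distr \<pi> borel snd \<Otimes>\<^sub>M distr \<pi> borel snd = distr (\<pi> \<Otimes>\<^sub>M \<pi>) (borel \<Otimes>\<^sub>M borel) (\<lambda>(z, z'). (snd z, snd z'))"
    using meas by (simp_all add: pair_measure_distr)
  have "(\<lambda>(z, z'). (fst z, fst z')) \<in> \<pi> \<Otimes>\<^sub>M \<pi> \<rightarrow>\<^sub>M borel \<Otimes>\<^sub>M borel"
    "(\<lambda>(z, z'). (snd z, snd z')) \<in> \<pi> \<Otimes>\<^sub>M \<pi> \<rightarrow>\<^sub>M borel \<Otimes>\<^sub>M borel"
    using meas by measurable
  then show ?thesis
    unfolding pairs using sets_\<pi>\<pi>
    by (simp add: nn_integral_distr case_prod_beta measurable_cong_sets[OF sets_\<pi>\<pi> refl] nn_integral_add)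
qed

lemma sets_pair_cone:
  "sets (X \<Otimes>\<^sub>M Y)
    = sets (((borel \<Otimes>\<^sub>M borel) \<Otimes>\<^sub>M (borel \<Otimes>\<^sub>M borel)) \<Otimes>\<^sub>M ((borel \<Otimes>\<^sub>M borel) \<Otimes>\<^sub>M (borel \<Otimes>\<^sub>M borel)))"
  if "sets X = sets borel" "sets Y = sets borel" for X Y :: "(('a \<times> real) \<times> ('b \<times> real)) measure"
  using that sets_borel_cone by (intro sets_pair_measure_cong) simp_all

lemma AE_cone_cost_le_mass_cost:
  "AE w in add_measure (lifted_plan \<Otimes>\<^sub>M unmatched) (unmatched \<Otimes>\<^sub>M cone_plan).
    (\<lambda>(((x, r), (y, s)), ((x', r'), (y', s'))).
      cone_D_pow_q \<phi> lam \<Delta> p (dist x x') (r * r') (dist y y') (s * s')) w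
    \<le> enn2ereal (\<phi> 0 * (mass_fst (fst w) * mass_fst (snd w) + mass_snd (fst w) * mass_snd (snd w)))"
proof -
  let ?Q = "\<lambda>w :: ('a \<times> real) \<times> ('b \<times> real). 0 \<le> snd (fst w) \<and> 0 \<le> snd (snd w)"
  have "{z \<in> space (X \<Otimes>\<^sub>M Y). ?Q (fst z) \<and> ?Q (snd z)} \<in> sets (X \<Otimes>\<^sub>M Y)"
    if "sets X = sets borel" "sets Y = sets borel" for X Y
    using sets_pair_cone[OF that] sets_eq_imp_space_eq[OF sets_pair_cone[OF that]] by simp measurable
  then have "AE z in X \<Otimes>\<^sub>M Y. ?Q (fst z) \<and> ?Q (snd z)"
    if "X \<in> {lifted_plan, unmatched, cone_plan}" "Y \<in> {lifted_plan, unmatched, cone_plan}" for X Y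
    using that finite_measure_cone_measures AE_radii_nonneg by (intro AE_pair_measure_fst_snd) auto
  then have "AE z in add_measure (lifted_plan \<Otimes>\<^sub>M unmatched) (unmatched \<Otimes>\<^sub>M cone_plan). ?Q (fst z) \<and> ?Q (snd z)"
    by (intro AE_add_measure) (auto intro!: sets_pair_measure_cong)
  then show ?thesis
    by eventually_elim (auto simp: mass_fst_def mass_snd_def intro!: cone_D_pow_q_le_mass split: prod.splits)
qed

text \<open>On the lifted part the cone cost is bounded through \<open>\<theta> = 1\<close> in \<open>H_c\<close>, which recovers the
  \<open>UGW\<close> integrand plus reverse entropies; on the rest it is bounded through \<open>\<theta> = 0\<close>.\<close>

lemma CGW_obj_cone_plan_le:
  assumes lsc: "lsc_on_nonneg \<phi>"
  shows "CGW_obj \<phi> lam \<Delta> p cone_plan \<le> UGW_obj \<phi> lam \<Delta> \<mu> \<nu> \<pi>"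
proof -
  define H :: "(('a \<times> real) \<times> ('b \<times> real)) \<times> (('a \<times> real) \<times> ('b \<times> real)) \<Rightarrow> ereal" where
    "H = (\<lambda>(((x, r), (y, s)), ((x', r'), (y', s'))).
      cone_D_pow_q \<phi> lam \<Delta> p (dist x x') (r * r') (dist y y') (s * s'))"
  define L :: "('a \<times> 'b) \<times> ('a \<times> 'b) \<Rightarrow> ereal" where
    "L = (\<lambda>((x, y), (x', y')). ereal (lam (\<Delta> (dist x x') (dist y y'))))"
  define Pj :: "(('a \<times> real) \<times> ('b \<times> real)) \<times> (('a \<times> real) \<times> ('b \<times> real)) \<Rightarrow> ('a \<times> 'b) \<times> ('a \<times> 'b)" where
    "Pj w = ((fst (fst (fst w)), fst (snd (fst w))), (fst (fst (snd w)), fst (snd (snd w))))" for w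
  define A :: "(('a \<times> real) \<times> ('b \<times> real)) \<times> (('a \<times> real) \<times> ('b \<times> real)) \<Rightarrow> ennreal" where
    "A w = psi \<phi> ((snd (fst (fst w)) * snd (fst (snd w))) powr p)
      + psi \<phi> ((snd (snd (fst w)) * snd (snd (snd w))) powr p)" for w
  define R where "R = add_measure (lifted_plan \<Otimes>\<^sub>M unmatched) (unmatched \<Otimes>\<^sub>M cone_plan)"
  have sets_\<pi>\<pi>: "sets (\<pi> \<Otimes>\<^sub>M \<pi>) = sets ((borel \<Otimes>\<^sub>M borel) \<Otimes>\<^sub>M (borel \<Otimes>\<^sub>M borel))"
    using sets_\<pi> by (intro sets_pair_measure_cong) (simp_all only: borel_prod)
  note [measurable] = borel_measurable_psi[OF lsc]
  have lift_meas [measurable]: "lift \<in> \<pi> \<rightarrow>\<^sub>M borel" using measurable_lift by simp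
  have T: "(\<lambda>(z, z'). (lift z, lift z')) \<in> \<pi> \<Otimes>\<^sub>M \<pi> \<rightarrow>\<^sub>M borel \<Otimes>\<^sub>M borel" by measurable
  have Pj: "Pj \<in> borel \<Otimes>\<^sub>M borel \<rightarrow>\<^sub>M \<pi> \<Otimes>\<^sub>M \<pi>"
    unfolding measurable_cong_sets[OF sets_pair_cone[OF refl refl] sets_\<pi>\<pi>] Pj_def by measurable
  have A: "A \<in> borel_measurable (borel \<Otimes>\<^sub>M borel)"
    unfolding measurable_cong_sets[OF sets_pair_cone[OF refl refl] refl] A_def by measurable
  have H_le_L: "H w \<le> L (Pj w) + enn2ereal (A w)" for w
    by (auto simp: H_def L_def Pj_def A_def cone_D_pow_q_le_L_c split: prod.splits)
  have H_le_B: "AE w in R. H w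
      \<le> enn2ereal (\<phi> 0 * (mass_fst (fst w) * mass_fst (snd w) + mass_snd (fst w) * mass_snd (snd w)))"
    unfolding H_def R_def by (rule AE_cone_cost_le_mass_cost)
  have "CGW_obj \<phi> lam \<Delta> p cone_plan
      = sint (add_measure (distr (\<pi> \<Otimes>\<^sub>M \<pi>) (borel \<Otimes>\<^sub>M borel) (\<lambda>(z, z'). (lift z, lift z'))) R) H"
    by (simp add: CGW_obj_def H_def pair_cone_plan_eq R_def)
  also have "\<dots> \<le> sint (\<pi> \<Otimes>\<^sub>M \<pi>) L
      + enn2ereal ((\<integral>\<^sup>+z. A (case z of (z, z') \<Rightarrow> (lift z, lift z')) \<partial>(\<pi> \<Otimes>\<^sub>M \<pi>))
        + (\<integral>\<^sup>+w. \<phi> 0 * (mass_fst (fst w) * mass_fst (snd w) + mass_snd (fst w) * mass_snd (snd w)) \<partial>R))"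
    by (rule sint_add_measure_distr_le[OF T Pj _ _ A H_le_L H_le_B])
      (auto simp: Pj_def lift_def R_def intro!: sets_pair_measure_cong split: prod.splits)
  also have "\<dots> \<le> sint (\<pi> \<Otimes>\<^sub>M \<pi>) L
      + enn2ereal (D_phi_tensor \<phi> (distr \<pi> borel fst) \<mu> + D_phi_tensor \<phi> (distr \<pi> borel snd) \<nu>)"
    using add_mono[OF X.D_phi_pair_ge[OF lsc] Y.D_phi_pair_ge[OF lsc]]
    by (intro add_left_mono)
      (simp add: less_eq_ennreal.rep_eq[symmetric] A_def lift_def case_prod_beta R_def nn_integral_mass_cost
        nn_integral_entropy_lift[OF lsc] D_phi_tensor_def ac_simps)
  also have "\<dots> = UGW_obj \<phi> lam \<Delta> \<mu> \<nu> \<pi>"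
    by (simp add: UGW_obj_def L_def plus_ennreal.rep_eq add.assoc)
  finally show ?thesis .
qed

end

lemma CGW_le_UGW_obj:
  fixes \<mu> :: "'a::polish_space measure" and \<nu> :: "'b::polish_space measure" and \<pi> :: "('a \<times> 'b) measure"
  assumes "0 < p" "lsc_on_nonneg \<phi>" "mm_space \<mu>" "mm_space \<nu>"
    and sets_\<pi>: "sets \<pi> = sets borel" and finite_\<pi>: "finite_measure \<pi>"
  shows "CGW \<phi> lam \<Delta> p \<mu> \<nu> \<le> UGW_obj \<phi> lam \<Delta> \<mu> \<nu> \<pi>"
proof -
  have \<mu>: "sets \<mu> = sets borel" "finite_measure \<mu>" and \<nu>: "sets \<nu> = sets borel" "finite_measure \<nu>"
    using assms(3,4) by (auto simp: mm_space_def)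
  have "fst \<in> \<pi> \<rightarrow>\<^sub>M borel" "snd \<in> \<pi> \<rightarrow>\<^sub>M borel"
    using sets_\<pi> by (simp_all only: measurable_cong_sets[OF sets_\<pi> refl] borel_prod[symmetric]) simp_all
  then have marginals: "finite_measure (distr \<pi> borel fst)" "finite_measure (distr \<pi> borel snd)"
    using finite_\<pi> by (auto intro: finite_measure.finite_measure_distr)
  obtain f N where "lebesgue_decomposition \<mu> (distr \<pi> borel fst) f N"
    using lebesgue_decomposition_exists[OF \<mu>(2) marginals(1)] \<mu>(1) by auto
  moreover obtain g N' where "lebesgue_decomposition \<nu> (distr \<pi> borel snd) g N'"
    using lebesgue_decomposition_exists[OF \<nu>(2) marginals(2)] \<nu>(1) by auto
  ultimately interpret cone_lift \<mu> \<nu> \<pi> f N g N' p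
    using assms \<mu> \<nu> by (simp add: cone_lift_def cone_side_def cone_side_axioms_def cone_lift_axioms_def)
  have "CGW \<phi> lam \<Delta> p \<mu> \<nu> \<le> CGW_obj \<phi> lam \<Delta> p cone_plan"
    unfolding CGW_def using cone_plan_in_U_p by (rule INF_lower)
  also have "\<dots> \<le> UGW_obj \<phi> lam \<Delta> \<mu> \<nu> \<pi>"
    using assms(2) by (rule CGW_obj_cone_plan_le)
  finally show ?thesis .
qed

text \<open>Besides the mm-space hypotheses, only the lower semicontinuity of \<open>\<phi>\<close> (for measurability) and
  \<open>p > 0\<close> are used: the comparison is pointwise in the cost \<open>lam (\<Delta> a b)\<close>, and \<open>q\<close> only names the
  power in \<open>D\<^sup>q\<close>.\<close>

theorem theorem2:
  fixes \<phi> :: "real \<Rightarrow> ennreal" and lam :: "real \<Rightarrow> real" and p q :: real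
    and \<Delta> :: "real \<Rightarrow> real \<Rightarrow> real"
    and \<mu> :: "'a::polish_space measure" and \<nu> :: "'b::polish_space measure"
  assumes "entropy_fn \<phi>" and "p > 0" and "q > 0" and "dist_on_nonneg \<Delta>"
    and "mm_space \<mu>" and "mm_space \<nu>"
  shows "UGW \<phi> lam \<Delta> \<mu> \<nu> \<ge> CGW \<phi> lam \<Delta> p \<mu> \<nu>"
  unfolding UGW_def
proof (rule INF_greatest)
  fix \<pi> :: "('a \<times> 'b) measure"
  assume "\<pi> \<in> {\<pi>. sets \<pi> = sets borel \<and> finite_measure \<pi>}"
  moreover have "lsc_on_nonneg \<phi>" using assms(1) by (simp add: entropy_fn_def)
  ultimately show "CGW \<phi> lam \<Delta> p \<mu> \<nu> \<le> UGW_obj \<phi> lam \<Delta> \<mu> \<nu> \<pi>"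
    using assms(2,5,6) by (intro CGW_le_UGW_obj) auto
qed

end
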